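(* Let $G$ be a graph with finitely many vertices. Let $\alpha=\alpha_1\alpha_2\cdots\alpha_n$ be a path in $G$ such that there are infinitely many edges from $s(\alpha_1)$ to $r(\alpha_1)$. Let $E$ be the graph with: - vertex set $G^0$; - edge set $G^1\cup\{\alpha^m: m\in\mathbb N\}$, consisting of $G^1$ together with countably infinitely many new edges; - range and source maps extending those of $G$, with $r_E(\alpha^m)=r_G(\alpha)$ and $s_E(\alpha^m)=s_G(\alpha)$. Then $G\sim_M E$.
   Context: A graph $G=(G^0,G^1,r,s)$ has vertex set $G^0$, edge set $G^1$, and range/source maps; multiple (even infinitely many) edges and loops are allowed. A path is a sequence of edges $e_1\cdots e_n$ with $r(e_i)=s(e_{i+1})$; it has $s(e_1\cdots e_n)=s(e_1)$ and $r(e_1\cdots e_n)=r(e_n)$. A source receives no edges, a sink emits no edges, and an infinite emitter emits infinitely many edges. A vertex is singular if it is a sink or infinite emitter, and regular otherwise. Move-equivalence $\sim_M$ is the smallest equivalence relation on graphs with finitely many vertices such that $G\sim_M E$ whenever $E$ is isomorphic to a graph obtained from $G$ by one of the following moves. (S) Delete a regular source together with the edges it emits. (R) For a regular vertex $u$ emitting exactly one edge $f$, with $r(f)\neq u$, and all of whose incoming edges have the same source $v$: delete $u$, $f$ and the edges into $u$, and add for each $e\in r^{-1}(u)$ an edge $[ef]$ from $v$ to $r(f)$. (O) Out-splitting at a non-sink $v$ along a partition $\mathcal E_1,\dots,\mathcal E_n$ of $s^{-1}(v)$ with at most one infinite part. Replace $v$ by $v^1,\dots,v^n$. Each edge $e$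 into $v$ becomes copies $e^1,\dots,e^n$ with $r(e^i)=v^i$ and source $s(e)$, or source $v^j$ if $s(e)=v$ and $e\in\mathcal E_j$. An edge from $v$ to $w\neq v$ lying in $\mathcal E_i$ gets source $v^i$. (I) In-splitting at a regular non-source $v$ along a partition $\mathcal E_1,\dots,\mathcal E_n$ of $r^{-1}(v)$. Replace $v$ by $v^1,\dots,v^n$. Each edge $e$ out of $v$ becomes copies $e^1,\dots,e^n$ with $s(e^i)=v^i$ and range $r(e)$, or range $v^j$ if $r(e)=v$ and $e\in\mathcal E_j$. An edge into $v$ from $w\neq v$ lying in $\mathcal E_i$ gets range $v^i$. *)

theory Defs
  imports Main
begin

record ('v, 'e) graph =
  verts :: "'v set"
  edges :: "'e set"
  src   :: "'e \<Rightarrow> 'v"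
  rng   :: "'e \<Rightarrow> 'v"

definition wf_graph :: "('v, 'e) graph \<Rightarrow> bool" where
  "wf_graph G \<longleftrightarrow> (\<forall>e\<in>edges G. src G e \<in> verts G \<and> rng G e \<in> verts G)"

definition out_edges :: "('v, 'e) graph \<Rightarrow> 'v \<Rightarrow> 'e set" where
  "out_edges G v = {e \<in> edges G. src G e = v}"

definition in_edges :: "('v, 'e) graph \<Rightarrow> 'v \<Rightarrow> 'e set" where
  "in_edges G v = {e \<in> edges G. rng G e = v}"

definition is_source :: "('v, 'e) graph \<Rightarrow> 'v \<Rightarrow> bool" where
  "is_source G v \<longleftrightarrow> in_edges G v = {}"

definition is_sink :: "('v, 'e) graph \<Rightarrow> 'v \<Rightarrow> bool" where
  "is_sink G v \<longleftrightarrow> out_edges G v = {}"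

definition is_regular :: "('v, 'e) graph \<Rightarrow> 'v \<Rightarrow> bool" where
  "is_regular G v \<longleftrightarrow> out_edges G v \<noteq> {} \<and> finite (out_edges G v)"

definition is_path :: "('v, 'e) graph \<Rightarrow> 'e list \<Rightarrow> bool" where
  "is_path G p \<longleftrightarrow> p \<noteq> [] \<and> set p \<subseteq> edges G \<and>
     (\<forall>i. Suc i < length p \<longrightarrow> rng G (p ! i) = src G (p ! Suc i))"

definition graph_iso :: "('v, 'e) graph \<Rightarrow> ('w, 'f) graph \<Rightarrow> bool" where
  "graph_iso G H \<longleftrightarrow> (\<exists>\<phi> \<psi>. bij_betw \<phi> (verts G) (verts H) \<and> bij_betw \<psi> (edges G) (edges H) \<and>
     (\<forall>e\<in>edges G. src H (\<psi> e) = \<phi> (src G e) \<and> rng H (\<psi> e) = \<phi> (rng G e)))"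

definition move_S :: "('v, 'e) graph \<Rightarrow> 'v \<Rightarrow> ('v, 'e) graph" where
  "move_S G u = \<lparr>verts = verts G - {u}, edges = edges G - out_edges G u,
                 src = src G, rng = rng G\<rparr>"

definition move_S_ok :: "('v, 'e) graph \<Rightarrow> 'v \<Rightarrow> bool" where
  "move_S_ok G u \<longleftrightarrow> u \<in> verts G \<and> is_regular G u \<and> is_source G u"

text \<open>(R) reduction at u emitting exactly the edge f; the new edge [ef] is encoded as Inr e.\<close>
definition move_R :: "('v, 'e) graph \<Rightarrow> 'v \<Rightarrow> 'e \<Rightarrow> 'v \<Rightarrow> ('v, 'e + 'e) graph" where
  "move_R G u f v = \<lparr>verts = verts G - {u},
     edges = Inl ` (edges G - {f} - in_edges G u) \<union> Inr ` in_edges G u,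
     src = (\<lambda>x. case x of Inl e \<Rightarrow> src G e | Inr e \<Rightarrow> v),
     rng = (\<lambda>x. case x of Inl e \<Rightarrow> rng G e | Inr e \<Rightarrow> rng G f)\<rparr>"

definition move_R_ok :: "('v, 'e) graph \<Rightarrow> 'v \<Rightarrow> 'e \<Rightarrow> 'v \<Rightarrow> bool" where
  "move_R_ok G u f v \<longleftrightarrow> u \<in> verts G \<and> v \<in> verts G \<and> is_regular G u \<and>
     out_edges G u = {f} \<and> rng G f \<noteq> u \<and> (\<forall>e\<in>in_edges G u. src G e = v)"

definition is_partition :: "'e set \<Rightarrow> nat \<Rightarrow> ('e \<Rightarrow> nat) \<Rightarrow> bool" where
  "is_partition A n p \<longleftrightarrow> n \<ge> 1 \<and> (\<forall>e\<in>A. p e \<in> {1..n}) \<and>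
     (\<forall>i\<in>{1..n}. {e\<in>A. p e = i} \<noteq> {})"

text \<open>(O) out-splitting at v; vertex w \<noteq> v is encoded (w,0), v^i as (v,i);
  edge copies e^i as (e,i), unsplit edges as (e,0).\<close>
definition move_O :: "('v, 'e) graph \<Rightarrow> 'v \<Rightarrow> nat \<Rightarrow> ('e \<Rightarrow> nat) \<Rightarrow> ('v \<times> nat, 'e \<times> nat) graph" where
  "move_O G v n p = \<lparr>verts = {(w, 0) | w. w \<in> verts G \<and> w \<noteq> v} \<union> {(v, i) | i. i \<in> {1..n}},
     edges = {(e, 0) | e. e \<in> edges G \<and> rng G e \<noteq> v} \<union>
             {(e, i) | e i. e \<in> edges G \<and> rng G e = v \<and> i \<in> {1..n}},
     src = (\<lambda>(e, i). if src G e = v then (v, p e) else (src G e, 0)),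
     rng = (\<lambda>(e, i). if rng G e = v then (v, i) else (rng G e, 0))\<rparr>"

definition move_O_ok :: "('v, 'e) graph \<Rightarrow> 'v \<Rightarrow> nat \<Rightarrow> ('e \<Rightarrow> nat) \<Rightarrow> bool" where
  "move_O_ok G v n p \<longleftrightarrow> v \<in> verts G \<and> \<not> is_sink G v \<and> is_partition (out_edges G v) n p \<and>
     card {i \<in> {1..n}. infinite {e \<in> out_edges G v. p e = i}} \<le> 1"

text \<open>(I) in-splitting at v, same encoding.\<close>
definition move_I :: "('v, 'e) graph \<Rightarrow> 'v \<Rightarrow> nat \<Rightarrow> ('e \<Rightarrow> nat) \<Rightarrow> ('v \<times> nat, 'e \<times> nat) graph" where
  "move_I G v n p = \<lparr>verts = {(w, 0) | w. w \<in> verts G \<and> w \<noteq> v} \<union> {(v, i) | i. i \<in> {1..n}},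
     edges = {(e, 0) | e. e \<in> edges G \<and> src G e \<noteq> v} \<union>
             {(e, i) | e i. e \<in> edges G \<and> src G e = v \<and> i \<in> {1..n}},
     src = (\<lambda>(e, i). if src G e = v then (v, i) else (src G e, 0)),
     rng = (\<lambda>(e, i). if rng G e = v then (v, p e) else (rng G e, 0))\<rparr>"

definition move_I_ok :: "('v, 'e) graph \<Rightarrow> 'v \<Rightarrow> nat \<Rightarrow> ('e \<Rightarrow> nat) \<Rightarrow> bool" where
  "move_I_ok G v n p \<longleftrightarrow> v \<in> verts G \<and> is_regular G v \<and> \<not> is_source G v \<and>
     is_partition (in_edges G v) n p"

definition move_step :: "('v, 'e) graph \<Rightarrow> ('w, 'f) graph \<Rightarrow> bool" where
  "move_step G H \<longleftrightarrow> wf_graph G \<and> wf_graph H \<and> finite (verts G) \<and> finite (verts H) \<and>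
     ((\<exists>u. move_S_ok G u \<and> graph_iso (move_S G u) H) \<or>
      (\<exists>u f v. move_R_ok G u f v \<and> graph_iso (move_R G u f v) H) \<or>
      (\<exists>v n p. move_O_ok G v n p \<and> graph_iso (move_O G v n p) H) \<or>
      (\<exists>v n p. move_I_ok G v n p \<and> graph_iso (move_I G v n p) H))"

text \<open>Since HOL cannot quantify over all graphs of all types, the
  equivalence closure is taken inside the universe of graphs with vertices in nat and
  edges in 'e + 'f + nat, into which both graphs embed up to isomorphism; every graph
  reachable by moves from a graph with edge set of cardinality \<kappa> has edge set of
  cardinality at most max \<kappa> \<aleph>_0, so this universe is large enough.\<close>
definition move_equiv :: "('v, 'e) graph \<Rightarrow> ('w, 'f) graph \<Rightarrow> bool" where
  "move_equiv G E \<longleftrightarrow> wf_graph G \<and> wf_graph E \<and> finite (verts G) \<and> finite (verts E) \<and>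
     (\<exists>(G' :: (nat, 'e + 'f + nat) graph) (E' :: (nat, 'e + 'f + nat) graph).
        graph_iso G G' \<and> graph_iso E E' \<and> equivclp move_step G' E')"

text \<open>The graph E of the theorem: add countably many new edges Inr m parallel to the path.\<close>
definition add_path_edges :: "('v, 'e) graph \<Rightarrow> 'e list \<Rightarrow> ('v, 'e + nat) graph" where
  "add_path_edges G \<alpha> = \<lparr>verts = verts G, edges = Inl ` edges G \<union> range Inr,
     src = (\<lambda>x. case x of Inl e \<Rightarrow> src G e | Inr m \<Rightarrow> src G (hd \<alpha>)),
     rng = (\<lambda>x. case x of Inl e \<Rightarrow> rng G e | Inr m \<Rightarrow> rng G (last \<alpha>))\<rparr>"

end

theory Submission
  imports Defs
begin

text \<open>
  Induction on the length of the path. Write it as \<gamma> g with \<gamma> from a to x and g from x to y, and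
  write X + (a \<rightarrow> u) for X with countably many new edges from a to u. By induction
  G \<sim> G + (a \<rightarrow> x). Rerouting the infinitely many edges from a to x along g (an out-splitting
  at x, an in-splitting and a reduction) produces infinitely many edges from a to y, which absorb
  countably many further such edges (Hilbert's hotel); doing the same moves in G + (a \<rightarrow> x) and in
  G + (a \<rightarrow> x) + (a \<rightarrow> y) therefore shows G + (a \<rightarrow> x) \<sim> G + (a \<rightarrow> x) + (a \<rightarrow> y). By induction
  again G + (a \<rightarrow> y) \<sim> G + (a \<rightarrow> y) + (a \<rightarrow> x), which is isomorphic to G + (a \<rightarrow> x) + (a \<rightarrow> y),
  so G \<sim> G + (a \<rightarrow> y).
\<close>

unbundle cardinal_syntax

subsection \<open>Isomorphisms\<close>

definition iso_via :: "('v, 'e) graph \<Rightarrow> ('w, 'f) graph \<Rightarrow> ('v \<Rightarrow> 'w) \<Rightarrow> ('e \<Rightarrow> 'f) \<Rightarrow> bool" where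
  "iso_via G H \<phi> \<psi> \<longleftrightarrow> bij_betw \<phi> (verts G) (verts H) \<and> bij_betw \<psi> (edges G) (edges H) \<and>
    (\<forall>e\<in>edges G. src H (\<psi> e) = \<phi> (src G e) \<and> rng H (\<psi> e) = \<phi> (rng G e))"

lemma graph_iso_iff_iso_via: "graph_iso G H \<longleftrightarrow> (\<exists>\<phi> \<psi>. iso_via G H \<phi> \<psi>)"
  unfolding graph_iso_def iso_via_def by blast

lemma iso_via_imp_graph_iso: "iso_via G H \<phi> \<psi> \<Longrightarrow> graph_iso G H"
  unfolding graph_iso_iff_iso_via by blast

lemma iso_via_inv_into:
  assumes "wf_graph G" "iso_via G H \<phi> \<psi>"
  shows "iso_via H G (inv_into (verts G) \<phi>) (inv_into (edges G) \<psi>)"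
proof -
  have \<phi>: "bij_betw \<phi> (verts G) (verts H)" and \<psi>: "bij_betw \<psi> (edges G) (edges H)"
    and hom: "\<forall>e\<in>edges G. src H (\<psi> e) = \<phi> (src G e) \<and> rng H (\<psi> e) = \<phi> (rng G e)"
    using assms(2) unfolding iso_via_def by auto
  have ends: "\<forall>e\<in>edges G. src G e \<in> verts G \<and> rng G e \<in> verts G"
    using assms(1) unfolding wf_graph_def by auto
  have inv_\<phi>: "inv_into (verts G) \<phi> (\<phi> x) = x" if "x \<in> verts G" for x
    using \<phi> that by (simp add: bij_betw_def)
  have "src G (inv_into (edges G) \<psi> e) = inv_into (verts G) \<phi> (src H e) \<and>
        rng G (inv_into (edges G) \<psi> e) = inv_into (verts G) \<phi> (rng H e)" if "e \<in> edges H" for e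
  proof -
    have "inv_into (edges G) \<psi> e \<in> edges G" "\<psi> (inv_into (edges G) \<psi> e) = e"
      using that \<psi> by (auto simp: bij_betw_def inv_into_into f_inv_into_f)
    then show ?thesis using hom ends inv_\<phi> by metis
  qed
  then show ?thesis
    using bij_betw_inv_into[OF \<phi>] bij_betw_inv_into[OF \<psi>] unfolding iso_via_def by blast
qed

lemma iso_via_comp:
  assumes "iso_via G H \<phi> \<psi>" "iso_via H K \<phi>' \<psi>'"
  shows "iso_via G K (\<phi>' \<circ> \<phi>) (\<psi>' \<circ> \<psi>)"
proof -
  have "\<forall>e\<in>edges G. \<psi> e \<in> edges H" using assms(1) unfolding iso_via_def bij_betw_def by blast
  then show ?thesis using assms unfolding iso_via_def by (auto intro: bij_betw_trans)
qed

lemma iso_via_wf_graph: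
  assumes "iso_via G H \<phi> \<psi>" "wf_graph G"
  shows "wf_graph H"
  unfolding wf_graph_def
proof
  fix e assume "e \<in> edges H"
  then obtain d where "d \<in> edges G" "e = \<psi> d"
    using assms(1) unfolding iso_via_def bij_betw_def by blast
  then show "src H e \<in> verts H \<and> rng H e \<in> verts H"
    using assms unfolding iso_via_def wf_graph_def bij_betw_def by auto
qed

lemma iso_via_finite_verts: "iso_via G H \<phi> \<psi> \<Longrightarrow> finite (verts G) \<Longrightarrow> finite (verts H)"
  unfolding iso_via_def bij_betw_def by (metis finite_imageI)

lemma graph_iso_sym: "wf_graph G \<Longrightarrow> graph_iso G H \<Longrightarrow> graph_iso H G"
  unfolding graph_iso_iff_iso_via by (blast dest: iso_via_inv_into)

lemma graph_iso_trans: "graph_iso G H \<Longrightarrow> graph_iso H K \<Longrightarrow> graph_iso G K"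
  unfolding graph_iso_iff_iso_via by (blast dest: iso_via_comp)

lemma graph_iso_wf_graph: "graph_iso G H \<Longrightarrow> wf_graph G \<Longrightarrow> wf_graph H"
  and graph_iso_finite_verts: "graph_iso G H \<Longrightarrow> finite (verts G) \<Longrightarrow> finite (verts H)"
  unfolding graph_iso_iff_iso_via by (blast intro: iso_via_wf_graph iso_via_finite_verts)+


definition relabel :: "('v, 'e) graph \<Rightarrow> ('v \<Rightarrow> 'w) \<Rightarrow> ('e \<Rightarrow> 'f) \<Rightarrow> ('w, 'f) graph" where
  "relabel G \<phi> \<psi> = \<lparr>verts = \<phi> ` verts G, edges = \<psi> ` edges G,
     src = \<phi> \<circ> src G \<circ> inv_into (edges G) \<psi>, rng = \<phi> \<circ> rng G \<circ> inv_into (edges G) \<psi>\<rparr>"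

lemma iso_via_relabel: "inj_on \<phi> (verts G) \<Longrightarrow> inj_on \<psi> (edges G) \<Longrightarrow> iso_via G (relabel G \<phi> \<psi>) \<phi> \<psi>"
  unfolding iso_via_def relabel_def bij_betw_def by (simp add: inv_into_f_f)

lemma obtain_iso_via_nat_verts:
  fixes G :: "('v, 'e) graph"
  assumes "finite (verts G)" "|edges G| \<le>o |UNIV :: 't set|"
  obtains H :: "(nat, 't) graph" and \<phi> \<psi> where "iso_via G H \<phi> \<psi>"
proof -
  obtain \<phi> :: "'v \<Rightarrow> nat" where "inj_on \<phi> (verts G)"
    using finite_imp_inj_to_nat_seg[OF assms(1)] by blast
  moreover obtain \<psi> :: "'e \<Rightarrow> 't" where "inj_on \<psi> (edges G)"
    using assms(2) unfolding card_of_ordLeq[symmetric] by blast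
  ultimately show thesis by (rule that[OF iso_via_relabel])
qed


lemma move_O_simps:
  "(x, i) \<in> edges (move_O G v n p) \<longleftrightarrow> x \<in> edges G \<and> (rng G x \<noteq> v \<and> i = 0 \<or> rng G x = v \<and> 1 \<le> i \<and> i \<le> n)"
  "(w, i) \<in> verts (move_O G v n p) \<longleftrightarrow> w \<in> verts G \<and> w \<noteq> v \<and> i = 0 \<or> w = v \<and> 1 \<le> i \<and> i \<le> n"
  "src (move_O G v n p) (x, i) = (if src G x = v then (v, p x) else (src G x, 0))"
  "rng (move_O G v n p) (x, i) = (if rng G x = v then (v, i) else (rng G x, 0))"
  unfolding move_O_def by auto

lemma verts_move_O: "verts (move_O G v n p) = (verts G - {v}) \<times> {0} \<union> {v} \<times> {1..n}"
  unfolding move_O_def by auto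

lemma edges_move_O: "edges (move_O G v n p) = (edges G - in_edges G v) \<times> {0} \<union> in_edges G v \<times> {1..n}"
  unfolding move_O_def in_edges_def by auto

lemma move_I_simps:
  "(x, i) \<in> edges (move_I G v n p) \<longleftrightarrow> x \<in> edges G \<and> (src G x \<noteq> v \<and> i = 0 \<or> src G x = v \<and> 1 \<le> i \<and> i \<le> n)"
  "(w, i) \<in> verts (move_I G v n p) \<longleftrightarrow> w \<in> verts G \<and> w \<noteq> v \<and> i = 0 \<or> w = v \<and> 1 \<le> i \<and> i \<le> n"
  "src (move_I G v n p) (x, i) = (if src G x = v then (v, i) else (src G x, 0))"
  "rng (move_I G v n p) (x, i) = (if rng G x = v then (v, p x) else (rng G x, 0))"
  unfolding move_I_def by auto

lemma move_R_simps:
  "Inl x \<in> edges (move_R G u f v) \<longleftrightarrow> x \<in> edges G \<and> x \<noteq> f \<and> rng G x \<noteq> u"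
  "Inr x \<in> edges (move_R G u f v) \<longleftrightarrow> x \<in> edges G \<and> rng G x = u"
  "verts (move_R G u f v) = verts G - {u}"
  "src (move_R G u f v) (Inl x) = src G x" "src (move_R G u f v) (Inr x) = v"
  "rng (move_R G u f v) (Inl x) = rng G x" "rng (move_R G u f v) (Inr x) = rng G f"
  unfolding move_R_def in_edges_def by auto

lemma src_rng_move_eqs:
  "src (move_O G v n p) = (\<lambda>(e, i). if src G e = v then (v, p e) else (src G e, 0))"
  "rng (move_O G v n p) = (\<lambda>(e, i). if rng G e = v then (v, i) else (rng G e, 0))"
  "src (move_I G v n p) = (\<lambda>(e, i). if src G e = v then (v, i) else (src G e, 0))"
  "rng (move_I G v n p) = (\<lambda>(e, i). if rng G e = v then (v, p e) else (rng G e, 0))"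
  "src (move_R G u f v) = (\<lambda>x. case x of Inl e \<Rightarrow> src G e | Inr e \<Rightarrow> v)"
  "rng (move_R G u f v) = (\<lambda>x. case x of Inl e \<Rightarrow> rng G e | Inr e \<Rightarrow> rng G f)"
  unfolding move_O_def move_I_def move_R_def by simp_all

definition reverse_graph :: "('v, 'e) graph \<Rightarrow> ('v, 'e) graph" where
  "reverse_graph G = \<lparr>verts = verts G, edges = edges G, src = rng G, rng = src G\<rparr>"

lemma reverse_graph_simps [simp]:
  "verts (reverse_graph G) = verts G" "edges (reverse_graph G) = edges G"
  "src (reverse_graph G) = rng G" "rng (reverse_graph G) = src G"
  "out_edges (reverse_graph G) v = in_edges G v" "in_edges (reverse_graph G) v = out_edges G v"
  "wf_graph (reverse_graph G) \<longleftrightarrow> wf_graph G"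
  unfolding reverse_graph_def out_edges_def in_edges_def wf_graph_def by auto

lemma move_I_eq_reverse_move_O: "move_I G v n p = reverse_graph (move_O (reverse_graph G) v n p)"
  by (rule graph.equality) (auto simp: move_I_def move_O_def fun_eq_iff)

lemma iso_via_reverse_graph: "iso_via G H \<phi> \<psi> \<Longrightarrow> iso_via (reverse_graph G) (reverse_graph H) \<phi> \<psi>"
  unfolding iso_via_def by simp

lemma wf_graph_move_O:
  assumes "wf_graph G" "is_partition (out_edges G v) n p"
  shows "wf_graph (move_O G v n p)"
  unfolding wf_graph_def
proof
  fix x assume "x \<in> edges (move_O G v n p)"
  then obtain e i where "x = (e, i)" "e \<in> edges G" "rng G e \<noteq> v \<and> i = 0 \<or> rng G e = v \<and> i \<in> {1..n}"
    unfolding move_O_def by auto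
  moreover have "src G e \<in> verts G" "rng G e \<in> verts G" "src G e = v \<Longrightarrow> p e \<in> {1..n}"
    using assms calculation(2) unfolding wf_graph_def is_partition_def out_edges_def by auto
  ultimately show "src (move_O G v n p) x \<in> verts (move_O G v n p) \<and> rng (move_O G v n p) x \<in> verts (move_O G v n p)"
    unfolding move_O_def by auto
qed

lemma wf_graph_move_I: "wf_graph G \<Longrightarrow> is_partition (in_edges G v) n p \<Longrightarrow> wf_graph (move_I G v n p)"
  unfolding move_I_eq_reverse_move_O by (simp add: wf_graph_move_O)

lemma wf_graph_move_R:
  assumes "wf_graph G" "move_R_ok G u f v"
  shows "wf_graph (move_R G u f v)"
proof -
  have f: "f \<in> edges G" "src G f = u" and only_f: "\<And>e. e \<in> edges G \<Longrightarrow> e \<noteq> f \<Longrightarrow> src G e \<noteq> u"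
    using assms(2) unfolding move_R_ok_def out_edges_def by auto
  have "v \<noteq> u" if "e \<in> in_edges G u" for e
  proof
    assume "v = u"
    then have "e = f" using that assms(2) only_f unfolding move_R_ok_def in_edges_def by blast
    then show False using that assms(2) unfolding move_R_ok_def in_edges_def by auto
  qed
  then show ?thesis
    using assms f only_f unfolding wf_graph_def move_R_def move_R_ok_def by (auto simp: in_edges_def)
qed

lemma finite_verts_move_O: "finite (verts G) \<Longrightarrow> finite (verts (move_O G v n p))"
  by (rule finite_subset[of _ "verts G \<times> {0} \<union> {v} \<times> {1..n}"]) (auto simp: move_O_def)

lemma finite_verts_move_I: "finite (verts G) \<Longrightarrow> finite (verts (move_I G v n p))"
  unfolding move_I_eq_reverse_move_O by (simp add: finite_verts_move_O)

lemma finite_verts_move_R: "finite (verts G) \<Longrightarrow> finite (verts (move_R G u f v))"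
  by (simp add: move_R_simps)

lemma card_edges_move_O:
  assumes "infinite (UNIV :: 't set)" "|edges G| \<le>o |UNIV :: 't set|"
  shows "|edges (move_O G v n p)| \<le>o |UNIV :: 't set|"
proof -
  have "|edges G \<times> (UNIV :: nat set)| \<le>o |UNIV :: 't set|"
    using card_of_Times_ordLeq_infinite_Field[of "|UNIV :: 't set|" "edges G" "UNIV :: nat set"]
      assms infinite_iff_card_of_nat[THEN iffD1, OF assms(1)]
    by (simp add: Field_card_of card_of_Card_order card_of_card_order_on)
  moreover have "edges (move_O G v n p) \<subseteq> edges G \<times> UNIV" by (auto simp: move_O_def)
  ultimately show ?thesis using card_of_mono1 ordLeq_transitive by blast
qed

lemma card_edges_move_I:
  "infinite (UNIV :: 't set) \<Longrightarrow> |edges G| \<le>o |UNIV :: 't set| \<Longrightarrow> |edges (move_I G v n p)| \<le>o |UNIV :: 't set|"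
  unfolding move_I_eq_reverse_move_O using card_edges_move_O[of "reverse_graph G"] by simp

lemma card_edges_move_R:
  assumes "infinite (UNIV :: 't set)" "|edges G| \<le>o |UNIV :: 't set|"
  shows "|edges (move_R G u f v)| \<le>o |UNIV :: 't set|"
proof -
  have "|edges G <+> edges G| \<le>o |UNIV :: 't set|"
    using card_of_Plus_ordLeq_infinite_Field[of "|UNIV :: 't set|" "edges G" "edges G"] assms
    by (simp add: Field_card_of card_of_Card_order card_of_card_order_on)
  moreover have "edges (move_R G u f v) \<subseteq> edges G <+> edges G"
    by (auto simp: move_R_def in_edges_def)
  ultimately show ?thesis using card_of_mono1 ordLeq_transitive by blast
qed

lemma move_O_ok_single_part:
  assumes "wf_graph G" "e \<in> edges G"
  shows "move_O_ok G (src G e) 1 (\<lambda>_. 1)"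
proof -
  have "card {i \<in> {1..1::nat}. infinite {e' \<in> out_edges G (src G e). (1::nat) = i}} \<le> card {1::nat}"
    by (rule card_mono) auto
  then show ?thesis
    using assms unfolding move_O_ok_def is_partition_def is_sink_def out_edges_def wf_graph_def by auto
qed

lemma iso_via_move_O_single_part:
  assumes "wf_graph G" "v \<in> verts G"
  shows "iso_via (move_O G v 1 (\<lambda>_. 1)) G fst fst"
  unfolding iso_via_def
proof (intro conjI)
  show "bij_betw fst (verts (move_O G v 1 (\<lambda>_. 1))) (verts G)"
    by (rule bij_betw_byWitness[where f'="\<lambda>w. if w = v then (v, 1) else (w, 0)"])
       (use assms in \<open>auto simp: move_O_def\<close>)
  show "bij_betw fst (edges (move_O G v 1 (\<lambda>_. 1))) (edges G)"
    by (rule bij_betw_byWitness[where f'="\<lambda>e. (e, if rng G e = v then 1 else 0)"])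
       (auto simp: move_O_def)
qed (auto simp: move_O_def)

text \<open>An out-splitting into a single part is a move that produces an isomorphic graph.\<close>
lemma equivclp_move_step_if_graph_iso:
  assumes "wf_graph G" "finite (verts G)" "wf_graph H" "finite (verts H)" "edges G \<noteq> {}"
    and "graph_iso G H"
  shows "equivclp move_step G H"
proof -
  obtain e where e: "e \<in> edges G" using assms(5) by blast
  then have v: "src G e \<in> verts G" using assms(1) unfolding wf_graph_def by auto
  have "graph_iso (move_O G (src G e) 1 (\<lambda>_. 1)) H"
    by (rule graph_iso_trans[OF iso_via_imp_graph_iso[OF iso_via_move_O_single_part[OF assms(1) v]] assms(6)])
  then have "move_step G H"
    unfolding move_step_def using assms(1-4) move_O_ok_single_part[OF assms(1) e] by blast
  then show ?thesis by blast
qed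

text \<open>Move equivalence with the universe of edges as a parameter, so that graphs of the different
  types produced by successive moves can be related.\<close>
definition move_equiv_in :: "'t itself \<Rightarrow> ('v, 'e) graph \<Rightarrow> ('w, 'f) graph \<Rightarrow> bool" where
  "move_equiv_in T G E \<longleftrightarrow> wf_graph G \<and> wf_graph E \<and> finite (verts G) \<and> finite (verts E) \<and>
     (\<exists>(G' :: (nat, 't) graph) (E' :: (nat, 't) graph).
        graph_iso G G' \<and> graph_iso E E' \<and> equivclp move_step G' E')"

lemma move_equiv_eq_move_equiv_in:
  fixes G :: "('v, 'e) graph" and E :: "('w, 'f) graph"
  shows "move_equiv G E = move_equiv_in TYPE('e + 'f + nat) G E"
  unfolding move_equiv_def move_equiv_in_def ..

lemma move_equiv_in_sym: "move_equiv_in T G E \<Longrightarrow> move_equiv_in T E G"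
  unfolding move_equiv_in_def by (blast intro: equivclp_sym)

lemma move_equiv_in_if_graph_iso:
  assumes "wf_graph G" "finite (verts G)" "|edges G| \<le>o |UNIV :: 't set|" "graph_iso G E" "wf_graph E"
  shows "move_equiv_in TYPE('t) G E"
proof -
  obtain G' :: "(nat, 't) graph" and \<phi> \<psi> where "iso_via G G' \<phi> \<psi>"
    using obtain_iso_via_nat_verts assms(2,3) by blast
  then have "graph_iso G G'" by (rule iso_via_imp_graph_iso)
  moreover have "graph_iso E G'" using graph_iso_sym[OF assms(1,4)] \<open>graph_iso G G'\<close> by (rule graph_iso_trans)
  ultimately show ?thesis
    unfolding move_equiv_in_def using assms graph_iso_finite_verts[OF assms(4,2)]
    by (intro conjI exI[of _ G']) simp_all
qed

lemma move_equiv_in_graph_iso_trans: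
  assumes "move_equiv_in TYPE('t) G H" "graph_iso H K" "wf_graph K"
  shows "move_equiv_in TYPE('t) G K"
proof -
  obtain G' H' :: "(nat, 't) graph" where GH: "graph_iso G G'" "graph_iso H H'" "equivclp move_step G' H'"
    and H: "wf_graph H" "finite (verts H)"
    using assms(1) unfolding move_equiv_in_def by blast
  have "graph_iso K H'" using graph_iso_trans[OF graph_iso_sym[OF H(1) assms(2)] GH(2)] .
  moreover have "wf_graph G" "finite (verts G)" using assms(1) unfolding move_equiv_in_def by blast+
  ultimately show ?thesis
    using assms(3) GH(1,3) graph_iso_finite_verts[OF assms(2) H(2)] unfolding move_equiv_in_def
    by (intro conjI exI[of _ G'] exI[of _ H']) auto
qed

lemma move_equiv_in_trans:
  assumes "move_equiv_in TYPE('t) G H" "move_equiv_in TYPE('t) H K" "edges H \<noteq> {}"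
  shows "move_equiv_in TYPE('t) G K"
proof -
  obtain G' H' :: "(nat, 't) graph" where GH: "graph_iso G G'" "graph_iso H H'" "equivclp move_step G' H'"
    using assms(1) unfolding move_equiv_in_def by blast
  obtain H'' K' :: "(nat, 't) graph" where HK: "graph_iso H H''" "graph_iso K K'" "equivclp move_step H'' K'"
    using assms(2) unfolding move_equiv_in_def by blast
  have H: "wf_graph H" "finite (verts H)" using assms(1) unfolding move_equiv_in_def by blast+
  have "equivclp move_step H' H''"
  proof (rule equivclp_move_step_if_graph_iso)
    show "graph_iso H' H''" using graph_iso_sym[OF H(1) GH(2)] HK(1) graph_iso_trans by blast
    show "edges H' \<noteq> {}" using GH(2) assms(3) unfolding graph_iso_def bij_betw_def by auto
  qed (use H GH(2) HK(1) graph_iso_wf_graph graph_iso_finite_verts in \<open>blast+\<close>)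
  then have "equivclp move_step G' K'" using GH(3) HK(3) by (meson equivclp_trans)
  then show ?thesis using assms(1,2) GH(1) HK(2) unfolding move_equiv_in_def
    by (intro conjI exI[of _ G'] exI[of _ K']) auto
qed


lemma move_equiv_in_graph_iso_cong:
  assumes "move_equiv_in TYPE('t) G' H'" "graph_iso G G'" "graph_iso H H'" "wf_graph G" "wf_graph H"
  shows "move_equiv_in TYPE('t) G H"
proof -
  have "move_equiv_in TYPE('t) H G'"
    using move_equiv_in_sym[OF move_equiv_in_graph_iso_trans[OF assms(1) graph_iso_sym[OF assms(5,3)] assms(5)]] .
  then show ?thesis
    using move_equiv_in_sym[OF move_equiv_in_graph_iso_trans[OF _ graph_iso_sym[OF assms(4,2)] assms(4)]] by blast
qed


subsection \<open>Moves commute with isomorphisms\<close>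

lemma is_partition_image: "is_partition (\<psi> ` A) n p \<longleftrightarrow> is_partition A n (p \<circ> \<psi>)"
  unfolding is_partition_def by auto

lemma infinite_parts_image:
  assumes "inj_on \<psi> A"
  shows "{i \<in> {1..n}. infinite {e \<in> \<psi> ` A. p e = i}} = {i \<in> {1..n}. infinite {e \<in> A. (p \<circ> \<psi>) e = i}}"
proof -
  have "{e \<in> \<psi> ` A. p e = i} = \<psi> ` {e \<in> A. (p \<circ> \<psi>) e = i}" for i by auto
  moreover have "inj_on \<psi> {e \<in> A. (p \<circ> \<psi>) e = i}" for i using assms by (rule inj_on_subset) auto
  ultimately show ?thesis by (simp add: finite_image_iff)
qed

lemma edges_move_R: "edges (move_R G u f v) = Inl ` (edges G - ({f} \<union> in_edges G u)) \<union> Inr ` in_edges G u"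
  unfolding move_R_def by (simp add: set_diff_eq)

lemma inj_on_map_sum_Inl_Inr:
  assumes "inj_on f A" "inj_on g B"
  shows "inj_on (map_sum f g) (Inl ` A \<union> Inr ` B)"
proof (rule inj_onI)
  fix x y assume "x \<in> Inl ` A \<union> Inr ` B" "y \<in> Inl ` A \<union> Inr ` B" "map_sum f g x = map_sum f g y"
  then show "x = y" using assms by (auto dest: inj_onD)
qed

lemma map_sum_image_Inl_Inr: "map_sum f g ` (Inl ` A \<union> Inr ` B) = Inl ` f ` A \<union> Inr ` g ` B"
  by (simp add: image_Un image_comp comp_def)

locale graph_isomorphism =
  fixes X :: "('a, 'b) graph" and Y :: "('c, 'd) graph" and \<phi> :: "'a \<Rightarrow> 'c" and \<psi> :: "'b \<Rightarrow> 'd"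
  assumes iso: "iso_via X Y \<phi> \<psi>" and wf: "wf_graph X"
begin

lemma inj_on_verts: "inj_on \<phi> (verts X)" and image_verts: "\<phi> ` verts X = verts Y"
  and inj_on_edges: "inj_on \<psi> (edges X)" and image_edges: "\<psi> ` edges X = edges Y"
  and src_map: "\<And>e. e \<in> edges X \<Longrightarrow> src Y (\<psi> e) = \<phi> (src X e)"
  and rng_map: "\<And>e. e \<in> edges X \<Longrightarrow> rng Y (\<psi> e) = \<phi> (rng X e)"
  using iso unfolding iso_via_def bij_betw_def by auto

lemma src_map_eq_iff: "e \<in> edges X \<Longrightarrow> v \<in> verts X \<Longrightarrow> src Y (\<psi> e) = \<phi> v \<longleftrightarrow> src X e = v"
  and rng_map_eq_iff: "e \<in> edges X \<Longrightarrow> v \<in> verts X \<Longrightarrow> rng Y (\<psi> e) = \<phi> v \<longleftrightarrow> rng X e = v"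
  using wf src_map rng_map inj_on_verts unfolding wf_graph_def inj_on_def by metis+

lemma out_edges_map: "v \<in> verts X \<Longrightarrow> out_edges Y (\<phi> v) = \<psi> ` out_edges X v"
  and in_edges_map: "v \<in> verts X \<Longrightarrow> in_edges Y (\<phi> v) = \<psi> ` in_edges X v"
  unfolding out_edges_def in_edges_def using src_map_eq_iff rng_map_eq_iff
  by (auto simp flip: image_edges)

lemma inj_on_out_edges: "inj_on \<psi> (out_edges X v)"
  using inj_on_edges by (auto simp: out_edges_def intro: inj_on_subset)

lemma move_O_ok_map:
  assumes "v \<in> verts X" "move_O_ok Y (\<phi> v) n p"
  shows "move_O_ok X v n (p \<circ> \<psi>)"
  using assms(2)[unfolded move_O_ok_def is_sink_def out_edges_map[OF assms(1)] is_partition_image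
      infinite_parts_image[OF inj_on_out_edges]]
  unfolding move_O_ok_def is_sink_def by (simp add: assms(1))

lemma move_I_ok_map:
  assumes "v \<in> verts X" "move_I_ok Y (\<phi> v) n p"
  shows "move_I_ok X v n (p \<circ> \<psi>)"
  using assms(2)[unfolded move_I_ok_def is_regular_def is_source_def out_edges_map[OF assms(1)]
      in_edges_map[OF assms(1)] is_partition_image finite_image_iff[OF inj_on_out_edges]]
  unfolding move_I_ok_def is_regular_def is_source_def by (simp add: assms(1))

lemma iso_via_move_O:
  assumes "v \<in> verts X"
  shows "iso_via (move_O X v n (p \<circ> \<psi>)) (move_O Y (\<phi> v) n p) (map_prod \<phi> id) (map_prod \<psi> id)"
  unfolding iso_via_def bij_betw_def
proof (intro conjI ballI)
  have "verts (move_O X v n (p \<circ> \<psi>)) \<subseteq> verts X \<times> UNIV" using assms by (auto simp: move_O_def)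
  then show "inj_on (map_prod \<phi> id) (verts (move_O X v n (p \<circ> \<psi>)))"
    using map_prod_inj_on[OF inj_on_verts inj_on_id] inj_on_subset by blast
  have "\<phi> ` (verts X - {v}) = verts Y - {\<phi> v}"
    using inj_on_image_set_diff[OF inj_on_verts] assms image_verts by auto
  then show "map_prod \<phi> id ` verts (move_O X v n (p \<circ> \<psi>)) = verts (move_O Y (\<phi> v) n p)"
    unfolding verts_move_O image_Un by (simp add: map_prod_surj_on)
  have "edges (move_O X v n (p \<circ> \<psi>)) \<subseteq> edges X \<times> UNIV" by (auto simp: move_O_def)
  then show "inj_on (map_prod \<psi> id) (edges (move_O X v n (p \<circ> \<psi>)))"
    using map_prod_inj_on[OF inj_on_edges inj_on_id] inj_on_subset by blast
  have "\<psi> ` (edges X - in_edges X v) = edges Y - in_edges Y (\<phi> v)"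
    using inj_on_image_set_diff[OF inj_on_edges] image_edges in_edges_map[OF assms]
    by (auto simp: in_edges_def)
  then show "map_prod \<psi> id ` edges (move_O X v n (p \<circ> \<psi>)) = edges (move_O Y (\<phi> v) n p)"
    unfolding edges_move_O image_Un using in_edges_map[OF assms] by (simp add: map_prod_surj_on)
next
  fix x assume "x \<in> edges (move_O X v n (p \<circ> \<psi>))"
  then obtain e i where "x = (e, i)" "e \<in> edges X" by (auto simp: move_O_def)
  then show "src (move_O Y (\<phi> v) n p) (map_prod \<psi> id x) = map_prod \<phi> id (src (move_O X v n (p \<circ> \<psi>)) x)"
    and "rng (move_O Y (\<phi> v) n p) (map_prod \<psi> id x) = map_prod \<phi> id (rng (move_O X v n (p \<circ> \<psi>)) x)"
    using assms src_map src_map_eq_iff rng_map rng_map_eq_iff by (auto simp: move_O_simps)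
qed

end

lemma graph_isomorphism_reverse_graph:
  "graph_isomorphism X Y \<phi> \<psi> \<Longrightarrow> graph_isomorphism (reverse_graph X) (reverse_graph Y) \<phi> \<psi>"
  unfolding graph_isomorphism_def using iso_via_reverse_graph by auto

context graph_isomorphism
begin

lemma iso_via_move_I:
  assumes "v \<in> verts X"
  shows "iso_via (move_I X v n (p \<circ> \<psi>)) (move_I Y (\<phi> v) n p) (map_prod \<phi> id) (map_prod \<psi> id)"
proof -
  have "iso_via (move_O (reverse_graph X) v n (p \<circ> \<psi>)) (move_O (reverse_graph Y) (\<phi> v) n p)
      (map_prod \<phi> id) (map_prod \<psi> id)"
    using graph_isomorphism.iso_via_move_O[OF graph_isomorphism_reverse_graph[OF graph_isomorphism_axioms]]
      assms by simp
  then show ?thesis unfolding move_I_eq_reverse_move_O by (rule iso_via_reverse_graph)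
qed

lemma move_R_ok_map:
  assumes "u \<in> verts X" "v \<in> verts X" "f \<in> edges X" "move_R_ok Y (\<phi> u) (\<psi> f) (\<phi> v)"
  shows "move_R_ok X u f v"
proof -
  have "\<psi> ` out_edges X u = \<psi> ` {f}"
    using assms(4) out_edges_map[OF assms(1)] unfolding move_R_ok_def by simp
  moreover have "out_edges X u \<subseteq> edges X" "{f} \<subseteq> edges X" using assms(3) by (auto simp: out_edges_def)
  ultimately have out: "out_edges X u = {f}" using inj_on_image_eq_iff[OF inj_on_edges] by blast
  have "src X e = v" if "e \<in> in_edges X u" for e
  proof -
    have "\<psi> e \<in> in_edges Y (\<phi> u)" using that in_edges_map[OF assms(1)] by blast
    then show ?thesis
      using assms(2,4) src_map_eq_iff that unfolding move_R_ok_def in_edges_def by auto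
  qed
  moreover have "rng X f \<noteq> u" using assms(1,3,4) rng_map_eq_iff unfolding move_R_ok_def by auto
  ultimately show ?thesis using assms(1,2) out unfolding move_R_ok_def is_regular_def by auto
qed

lemma iso_via_move_R:
  assumes "u \<in> verts X" "f \<in> edges X"
  shows "iso_via (move_R X u f v) (move_R Y (\<phi> u) (\<psi> f) (\<phi> v)) \<phi> (map_sum \<psi> \<psi>)"
  unfolding iso_via_def bij_betw_def
proof (intro conjI ballI)
  show "inj_on \<phi> (verts (move_R X u f v))"
    using inj_on_verts by (auto simp: move_R_simps intro: inj_on_subset)
  show "\<phi> ` verts (move_R X u f v) = verts (move_R Y (\<phi> u) (\<psi> f) (\<phi> v))"
    using inj_on_image_set_diff[OF inj_on_verts] assms(1) image_verts by (auto simp: move_R_simps)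
  have in_sub: "in_edges X u \<subseteq> edges X" by (auto simp: in_edges_def)
  show "inj_on (map_sum \<psi> \<psi>) (edges (move_R X u f v))"
    unfolding edges_move_R using inj_on_edges in_sub
    by (intro inj_on_map_sum_Inl_Inr) (auto intro: inj_on_subset)
  have "\<psi> ` (edges X - ({f} \<union> in_edges X u)) = edges Y - ({\<psi> f} \<union> in_edges Y (\<phi> u))"
    using inj_on_image_set_diff[OF inj_on_edges, of "edges X" "{f} \<union> in_edges X u"] assms in_sub
      image_edges in_edges_map[OF assms(1)] by auto
  then show "map_sum \<psi> \<psi> ` edges (move_R X u f v) = edges (move_R Y (\<phi> u) (\<psi> f) (\<phi> v))"
    unfolding edges_move_R map_sum_image_Inl_Inr in_edges_map[OF assms(1)] by simp
next
  fix x assume "x \<in> edges (move_R X u f v)"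
  then show "src (move_R Y (\<phi> u) (\<psi> f) (\<phi> v)) (map_sum \<psi> \<psi> x) = \<phi> (src (move_R X u f v) x)"
    and "rng (move_R Y (\<phi> u) (\<psi> f) (\<phi> v)) (map_sum \<psi> \<psi> x) = \<phi> (rng (move_R X u f v) x)"
    using assms(2) src_map rng_map unfolding edges_move_R by (auto simp: move_R_simps)
qed

end


lemma obtain_graph_isomorphism_from_nat_verts:
  fixes Y :: "('v, 'e) graph"
  assumes "wf_graph Y" "finite (verts Y)" "|edges Y| \<le>o |UNIV :: 't set|"
  obtains X :: "(nat, 't) graph" and \<phi> \<psi> where "graph_isomorphism X Y \<phi> \<psi>" "finite (verts X)"
proof -
  obtain X :: "(nat, 't) graph" and \<phi> \<psi> where iso: "iso_via Y X \<phi> \<psi>"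
    using obtain_iso_via_nat_verts assms(2,3) by blast
  then have "graph_isomorphism X Y (inv_into (verts Y) \<phi>) (inv_into (edges Y) \<psi>)"
    using iso_via_inv_into[OF assms(1)] iso_via_wf_graph[OF _ assms(1)] by (unfold_locales) blast+
  then show thesis using that iso_via_finite_verts[OF iso assms(2)] by blast
qed

lemma move_equiv_in_if_move_step:
  fixes X :: "(nat, 't) graph"
  assumes "graph_iso X Y" "wf_graph X" "finite (verts X)"
    and "wf_graph Z" "finite (verts Z)" "|edges Z| \<le>o |UNIV :: 't set|"
    and step: "\<And>W :: (nat, 't) graph. graph_iso Z W \<Longrightarrow> wf_graph W \<Longrightarrow> finite (verts W) \<Longrightarrow> move_step X W"
  shows "move_equiv_in TYPE('t) Y Z"
proof -
  obtain W :: "(nat, 't) graph" and \<phi> \<psi> where W: "iso_via Z W \<phi> \<psi>"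
    using obtain_iso_via_nat_verts assms(5,6) by blast
  then have "graph_iso Z W" "wf_graph W" "finite (verts W)"
    using iso_via_imp_graph_iso iso_via_wf_graph[OF W assms(4)] iso_via_finite_verts[OF W assms(5)] by blast+
  moreover from this have "equivclp move_step X W" using step by blast
  moreover have "graph_iso Y X" "wf_graph Y" "finite (verts Y)"
    using graph_iso_sym[OF assms(2,1)] graph_iso_wf_graph[OF assms(1,2)] graph_iso_finite_verts[OF assms(1,3)]
    by blast+
  ultimately show ?thesis
    unfolding move_equiv_in_def using assms(4,5) by (intro conjI exI[of _ X] exI[of _ W]) auto
qed

lemma move_equiv_in_move_O:
  fixes Y :: "('v, 'e) graph"
  assumes "infinite (UNIV :: 't set)" "wf_graph Y" "finite (verts Y)" "|edges Y| \<le>o |UNIV :: 't set|"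
    and "move_O_ok Y w n p"
  shows "move_equiv_in TYPE('t) Y (move_O Y w n p)"
proof -
  obtain X :: "(nat, 't) graph" and \<phi> \<psi> where X: "graph_isomorphism X Y \<phi> \<psi>" "finite (verts X)"
    using obtain_graph_isomorphism_from_nat_verts assms(2-4) by blast
  interpret graph_isomorphism X Y \<phi> \<psi> by (rule X(1))
  obtain v where v: "v \<in> verts X" "w = \<phi> v" using assms(5) image_verts unfolding move_O_ok_def by auto
  have ok: "move_O_ok X v n (p \<circ> \<psi>)" using move_O_ok_map v assms(5) by simp
  have iso_move: "graph_iso (move_O X v n (p \<circ> \<psi>)) (move_O Y w n p)"
    using iso_via_imp_graph_iso[OF iso_via_move_O[OF v(1)]] v(2) by simp
  show ?thesis
  proof (rule move_equiv_in_if_move_step)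
    show "graph_iso X Y" using iso by (rule iso_via_imp_graph_iso)
    show "wf_graph (move_O Y w n p)"
      using assms(5) unfolding move_O_ok_def by (intro wf_graph_move_O[OF assms(2)]) simp
    fix W :: "(nat, 't) graph" assume "graph_iso (move_O Y w n p) W" "wf_graph W" "finite (verts W)"
    then show "move_step X W"
      unfolding move_step_def using ok graph_iso_trans[OF iso_move] wf X(2) by blast
  qed (use X(2) wf finite_verts_move_O assms(3) card_edges_move_O assms(1,4) in auto)
qed

lemma move_equiv_in_move_I:
  fixes Y :: "('v, 'e) graph"
  assumes "infinite (UNIV :: 't set)" "wf_graph Y" "finite (verts Y)" "|edges Y| \<le>o |UNIV :: 't set|"
    and "move_I_ok Y w n p"
  shows "move_equiv_in TYPE('t) Y (move_I Y w n p)"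
proof -
  obtain X :: "(nat, 't) graph" and \<phi> \<psi> where X: "graph_isomorphism X Y \<phi> \<psi>" "finite (verts X)"
    using obtain_graph_isomorphism_from_nat_verts assms(2-4) by blast
  interpret graph_isomorphism X Y \<phi> \<psi> by (rule X(1))
  obtain v where v: "v \<in> verts X" "w = \<phi> v" using assms(5) image_verts unfolding move_I_ok_def by auto
  have ok: "move_I_ok X v n (p \<circ> \<psi>)" using move_I_ok_map v assms(5) by simp
  have iso_move: "graph_iso (move_I X v n (p \<circ> \<psi>)) (move_I Y w n p)"
    using iso_via_imp_graph_iso[OF iso_via_move_I[OF v(1)]] v(2) by simp
  show ?thesis
  proof (rule move_equiv_in_if_move_step)
    show "graph_iso X Y" using iso by (rule iso_via_imp_graph_iso)
    show "wf_graph (move_I Y w n p)"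
      using assms(5) unfolding move_I_ok_def by (intro wf_graph_move_I[OF assms(2)]) simp
    fix W :: "(nat, 't) graph" assume "graph_iso (move_I Y w n p) W" "wf_graph W" "finite (verts W)"
    then show "move_step X W"
      unfolding move_step_def using ok graph_iso_trans[OF iso_move] wf X(2) by blast
  qed (use X(2) wf finite_verts_move_I assms(3) card_edges_move_I assms(1,4) in auto)
qed

lemma move_equiv_in_move_R:
  fixes Y :: "('v, 'e) graph"
  assumes "infinite (UNIV :: 't set)" "wf_graph Y" "finite (verts Y)" "|edges Y| \<le>o |UNIV :: 't set|"
    and "move_R_ok Y u f v"
  shows "move_equiv_in TYPE('t) Y (move_R Y u f v)"
proof -
  obtain X :: "(nat, 't) graph" and \<phi> \<psi> where X: "graph_isomorphism X Y \<phi> \<psi>" "finite (verts X)"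
    using obtain_graph_isomorphism_from_nat_verts assms(2-4) by blast
  interpret graph_isomorphism X Y \<phi> \<psi> by (rule X(1))
  have "u \<in> verts Y" "v \<in> verts Y" "f \<in> edges Y"
    using assms(5) unfolding move_R_ok_def out_edges_def by auto
  then obtain u' v' f' where uvf: "u' \<in> verts X" "u = \<phi> u'" "v' \<in> verts X" "v = \<phi> v'" "f' \<in> edges X" "f = \<psi> f'"
    using image_verts image_edges by blast
  have ok: "move_R_ok X u' f' v'" using move_R_ok_map uvf assms(5) by simp
  have iso_move: "graph_iso (move_R X u' f' v') (move_R Y u f v)"
    using iso_via_imp_graph_iso[OF iso_via_move_R[OF uvf(1,5)]] uvf by simp
  show ?thesis
  proof (rule move_equiv_in_if_move_step)
    show "graph_iso X Y" using iso by (rule iso_via_imp_graph_iso)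
    show "wf_graph (move_R Y u f v)" by (rule wf_graph_move_R[OF assms(2,5)])
    fix W :: "(nat, 't) graph" assume "graph_iso (move_R Y u f v) W" "wf_graph W" "finite (verts W)"
    then show "move_step X W"
      unfolding move_step_def using ok graph_iso_trans[OF iso_move] wf X(2) by blast
  qed (use X(2) wf finite_verts_move_R assms(3) card_edges_move_R assms(1,4) in auto)
qed


subsection \<open>Adding parallel edges\<close>

definition add_edges :: "('v, 'e) graph \<Rightarrow> 'v \<Rightarrow> 'v \<Rightarrow> nat set \<Rightarrow> ('v, 'e + nat) graph" where
  "add_edges G a b S = \<lparr>verts = verts G, edges = Inl ` edges G \<union> Inr ` S,
     src = (\<lambda>x. case x of Inl e \<Rightarrow> src G e | Inr m \<Rightarrow> a),
     rng = (\<lambda>x. case x of Inl e \<Rightarrow> rng G e | Inr m \<Rightarrow> b)\<rparr>"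

lemma add_path_edges_eq_add_edges: "add_path_edges G \<alpha> = add_edges G (src G (hd \<alpha>)) (rng G (last \<alpha>)) UNIV"
  unfolding add_path_edges_def add_edges_def by simp

lemma src_rng_add_edges_eqs:
  "src (add_edges G a b S) = (\<lambda>x. case x of Inl e \<Rightarrow> src G e | Inr m \<Rightarrow> a)"
  "rng (add_edges G a b S) = (\<lambda>x. case x of Inl e \<Rightarrow> rng G e | Inr m \<Rightarrow> b)"
  unfolding add_edges_def by simp_all

lemma add_edges_simps [simp]:
  "verts (add_edges G a b S) = verts G"
  "Inl e \<in> edges (add_edges G a b S) \<longleftrightarrow> e \<in> edges G" "Inr m \<in> edges (add_edges G a b S) \<longleftrightarrow> m \<in> S"
  "src (add_edges G a b S) (Inl e) = src G e" "src (add_edges G a b S) (Inr m) = a"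
  "rng (add_edges G a b S) (Inl e) = rng G e" "rng (add_edges G a b S) (Inr m) = b"
  unfolding add_edges_def by auto

lemma wf_graph_add_edges: "wf_graph G \<Longrightarrow> a \<in> verts G \<Longrightarrow> b \<in> verts G \<Longrightarrow> wf_graph (add_edges G a b S)"
  unfolding wf_graph_def add_edges_def by auto

lemma card_edges_add_edges:
  assumes "infinite (UNIV :: 't set)" "|edges G| \<le>o |UNIV :: 't set|"
  shows "|edges (add_edges G a b S)| \<le>o |UNIV :: 't set|"
proof -
  have "|edges G <+> (UNIV :: nat set)| \<le>o |UNIV :: 't set|"
    using card_of_Plus_ordLeq_infinite_Field[of "|UNIV :: 't set|" "edges G" "UNIV :: nat set"]
      assms infinite_iff_card_of_nat[THEN iffD1, OF assms(1)]
    by (simp add: Field_card_of card_of_Card_order card_of_card_order_on)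
  moreover have "edges (add_edges G a b S) \<subseteq> edges G <+> UNIV" by (auto simp: add_edges_def)
  ultimately show ?thesis using card_of_mono1 ordLeq_transitive by blast
qed

lemma iso_via_add_no_edges: "iso_via G (add_edges G a b {}) id Inl"
  unfolding iso_via_def add_edges_def by (auto simp: bij_betw_def)

lemma iso_via_add_edges:
  assumes "iso_via G H \<phi> \<psi>"
  shows "iso_via (add_edges G a b S) (add_edges H (\<phi> a) (\<phi> b) S) \<phi> (map_sum \<psi> id)"
proof -
  have "bij_betw \<psi> (edges G) (edges H)" using assms unfolding iso_via_def by blast
  then have "bij_betw (map_sum \<psi> id) (Inl ` edges G \<union> Inr ` S) (Inl ` edges H \<union> Inr ` S)"
    unfolding bij_betw_def map_sum_image_Inl_Inr by (simp add: inj_on_map_sum_Inl_Inr)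
  then show ?thesis using assms unfolding iso_via_def add_edges_def by auto
qed

definition swap_new_edges :: "('e + nat) + nat \<Rightarrow> ('e + nat) + nat" where
  "swap_new_edges x = (case x of Inl (Inl e) \<Rightarrow> Inl (Inl e) | Inl (Inr m) \<Rightarrow> Inr m | Inr m \<Rightarrow> Inl (Inr m))"

lemma iso_via_add_edges_swap:
  "iso_via (add_edges (add_edges G a b S) c d T) (add_edges (add_edges G c d T) a b S) id swap_new_edges"
  unfolding iso_via_def
proof (intro conjI)
  show "bij_betw swap_new_edges (edges (add_edges (add_edges G a b S) c d T)) (edges (add_edges (add_edges G c d T) a b S))"
    by (rule bij_betw_byWitness[where f'=swap_new_edges]) (auto simp: swap_new_edges_def add_edges_def)
qed (auto simp: swap_new_edges_def add_edges_def)

definition parallel_edges :: "('v, 'e) graph \<Rightarrow> 'v \<Rightarrow> 'v \<Rightarrow> 'e set" where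
  "parallel_edges G u w = {e \<in> edges G. src G e = u \<and> rng G e = w}"

lemma infinite_parallel_edges_iso_via:
  assumes "iso_via G H \<phi> \<psi>" "infinite (parallel_edges G u w)"
  shows "infinite (parallel_edges H (\<phi> u) (\<phi> w))"
proof -
  have "\<psi> ` parallel_edges G u w \<subseteq> parallel_edges H (\<phi> u) (\<phi> w)" "inj_on \<psi> (parallel_edges G u w)"
    using assms(1) unfolding iso_via_def bij_betw_def parallel_edges_def by (auto intro: inj_on_subset)
  then show ?thesis using inj_on_finite assms(2) by blast
qed

lemma infinite_parallel_edges_add_edges:
  assumes "infinite (parallel_edges G u w)"
  shows "infinite (parallel_edges (add_edges G a b S) u w)"
proof -
  have "Inl ` parallel_edges G u w \<subseteq> parallel_edges (add_edges G a b S) u w"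
    by (auto simp: parallel_edges_def)
  then show ?thesis using inj_on_finite[OF inj_on_subset[OF inj_Inl subset_UNIV]] assms by blast
qed

lemma infinite_parallel_new_edges: "infinite (parallel_edges (add_edges G a b UNIV) a b)"
proof -
  have "range Inr \<subseteq> parallel_edges (add_edges G a b UNIV) a b" by (auto simp: parallel_edges_def)
  then show ?thesis using inj_on_finite[OF inj_Inr] by blast
qed

text \<open>Hilbert's hotel: countably many new edges parallel to infinitely many old ones are absorbed.\<close>
lemma graph_iso_absorb_parallel_edges:
  fixes h :: "nat \<Rightarrow> 'e"
  assumes "verts H = verts G" "src H = src G" "rng H = rng G" "edges G \<subseteq> edges H"
    and "edges H - edges G \<subseteq> range h"
    and "\<forall>e\<in>edges H - edges G. src G e = x \<and> rng G e = y"
    and "infinite (parallel_edges G x y)"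
  shows "graph_iso H G"
proof -
  define Q where "Q = parallel_edges G x y"
  define D where "D = edges H - edges G"
  have "|D| \<le>o |UNIV :: nat set|"
    using ordLeq_transitive[OF card_of_mono1[OF assms(5)] card_of_image] unfolding D_def .
  moreover have "|UNIV :: nat set| \<le>o |Q|" using assms(7) infinite_iff_card_of_nat unfolding Q_def by blast
  ultimately have "|Q <+> D| =o |Q|"
    using card_of_Plus_infinite1 assms(7) ordLeq_transitive unfolding Q_def by blast
  then have "|Q \<union> D| \<le>o |Q|" using ordLeq_ordIso_trans[OF card_of_Un_Plus_ordLeq] by blast
  then have "|Q \<union> D| =o |Q|" using card_of_mono1[of Q "Q \<union> D"] ordIso_iff_ordLeq by blast
  then obtain k where k: "bij_betw k (Q \<union> D) Q" using card_of_ordIso by blast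
  define \<psi> where "\<psi> e = (if e \<in> Q \<union> D then k e else e)" for e
  have "bij_betw \<psi> (Q \<union> D) Q" using k bij_betw_cong[of "Q \<union> D" \<psi> k] unfolding \<psi>_def by simp
  moreover have "bij_betw \<psi> (edges G - Q) (edges G - Q)"
    using bij_betw_cong[of "edges G - Q" \<psi> id] unfolding \<psi>_def D_def by simp
  ultimately have "bij_betw \<psi> ((Q \<union> D) \<union> (edges G - Q)) (Q \<union> (edges G - Q))"
    by (rule bij_betw_combine) blast
  moreover have "edges H = (Q \<union> D) \<union> (edges G - Q)" "edges G = Q \<union> (edges G - Q)"
    using assms(4) unfolding Q_def D_def parallel_edges_def by blast+
  ultimately have "bij_betw \<psi> (edges H) (edges G)" by simp
  moreover have "src G (\<psi> e) = src G e \<and> rng G (\<psi> e) = rng G e" for e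
  proof (cases "e \<in> Q \<union> D")
    case True
    then have "k e \<in> Q" using k unfolding bij_betw_def by blast
    then show ?thesis using True assms(6) unfolding \<psi>_def Q_def D_def parallel_edges_def by auto
  qed (simp add: \<psi>_def)
  ultimately have "iso_via H G id \<psi>" unfolding iso_via_def using assms(1-3) by simp
  then show ?thesis by (rule iso_via_imp_graph_iso)
qed

lemma graph_iso_add_edges_absorb:
  assumes "wf_graph G" "infinite (parallel_edges G a c)"
  shows "graph_iso (add_edges G a c UNIV) G"
proof -
  have "graph_iso (add_edges G a c UNIV) (add_edges G a c {})"
    using infinite_parallel_edges_add_edges[OF assms(2), where a=a and b=c and S="{}"]
    by (intro graph_iso_absorb_parallel_edges[where h=Inr and x=a and y=c]) (auto simp: add_edges_def)
  moreover have "graph_iso (add_edges G a c {}) G"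
    using graph_iso_sym[OF assms(1) iso_via_imp_graph_iso[OF iso_via_add_no_edges]] .
  ultimately show ?thesis by (rule graph_iso_trans)
qed

lemma move_equiv_in_add_edges_absorb:
  assumes "wf_graph X" "finite (verts X)" "|edges X| \<le>o |UNIV :: 't set|"
    and "a \<in> verts X" "c \<in> verts X" "infinite (parallel_edges X a c)"
  shows "move_equiv_in TYPE('t) X (add_edges X a c UNIV)"
proof -
  have wf: "wf_graph (add_edges X a c UNIV)" by (rule wf_graph_add_edges[OF assms(1,4,5)])
  show ?thesis
    by (rule move_equiv_in_if_graph_iso[OF assms(1-3) graph_iso_sym[OF wf graph_iso_add_edges_absorb[OF assms(1,6)]] wf])
qed

subsection \<open>Rerouting edges along an edge\<close>

text \<open>Given an edge f from b to c \<noteq> b and an edge from a to b, out-split b so that (b, 1) emits only f,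
  in-split (b, 1) so that ((b, 1), 1) receives exactly the edges from a, and reduce ((b, 1), 1): each
  edge from a to b yields an edge from a to c. After the out-splitting, a is represented by copy_of a b.\<close>

definition out_part_count :: "('v, 'e) graph \<Rightarrow> 'v \<Rightarrow> 'e \<Rightarrow> nat" where
  "out_part_count Y b f = (if out_edges Y b \<subseteq> {f} then 1 else 2)"

definition out_part_label :: "'e \<Rightarrow> 'e \<Rightarrow> nat" where
  "out_part_label f = (\<lambda>e. if e = f then 1 else 2)"

definition split_off_edge :: "('v, 'e) graph \<Rightarrow> 'v \<Rightarrow> 'e \<Rightarrow> ('v \<times> nat, 'e \<times> nat) graph" where
  "split_off_edge Y b f = move_O Y b (out_part_count Y b f) (out_part_label f)"

definition copy_of :: "'v \<Rightarrow> 'v \<Rightarrow> 'v \<times> nat" where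
  "copy_of a b = (if a = b then (b, 2) else (a, 0))"

lemma copy_of_ne: "copy_of a b \<noteq> (b, 1)"
  unfolding copy_of_def by auto

definition in_part_count :: "('v, 'e) graph \<Rightarrow> 'v \<Rightarrow> 'v \<Rightarrow> 'e \<Rightarrow> nat" where
  "in_part_count Y a b f =
     (if \<exists>e\<in>in_edges (split_off_edge Y b f) (b, 1). src (split_off_edge Y b f) e \<noteq> copy_of a b then 2 else 1)"

definition in_part_label :: "('v, 'e) graph \<Rightarrow> 'v \<Rightarrow> 'v \<Rightarrow> 'e \<Rightarrow> 'e \<times> nat \<Rightarrow> nat" where
  "in_part_label Y a b f = (\<lambda>e. if src (split_off_edge Y b f) e = copy_of a b then 1 else 2)"

definition split_off_source ::
  "('v, 'e) graph \<Rightarrow> 'v \<Rightarrow> 'v \<Rightarrow> 'e \<Rightarrow> (('v \<times> nat) \<times> nat, ('e \<times> nat) \<times> nat) graph" where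
  "split_off_source Y a b f =
     move_I (split_off_edge Y b f) (b, 1) (in_part_count Y a b f) (in_part_label Y a b f)"

definition reroute :: "('v, 'e) graph \<Rightarrow> 'v \<Rightarrow> 'v \<Rightarrow> 'e \<Rightarrow>
    (('v \<times> nat) \<times> nat, ('e \<times> nat) \<times> nat + ('e \<times> nat) \<times> nat) graph" where
  "reroute Y a b f = move_R (split_off_source Y a b f) ((b, 1), 1) ((f, 0), 1) (copy_of a b, 0)"

locale reroute_setting =
  fixes Y :: "('v, 'e) graph" and a b :: 'v and f :: 'e
  assumes wf: "wf_graph Y" and fin: "finite (verts Y)"
    and fe: "f \<in> edges Y" and sf: "src Y f = b" and rf: "rng Y f \<noteq> b"
    and edge_a_b: "\<exists>p\<in>edges Y. src Y p = a \<and> rng Y p = b"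
begin

lemma av: "a \<in> verts Y" and bv: "b \<in> verts Y"
  using wf edge_a_b unfolding wf_graph_def by auto

lemma is_partition_split_off_edge: "is_partition (out_edges Y b) (out_part_count Y b f) (out_part_label f)"
  unfolding is_partition_def
proof (intro conjI ballI)
  show "1 \<le> out_part_count Y b f" unfolding out_part_count_def by simp
  fix e assume "e \<in> out_edges Y b"
  then show "out_part_label f e \<in> {1..out_part_count Y b f}"
    unfolding out_part_count_def out_part_label_def by auto
next
  fix i assume i: "i \<in> {1..out_part_count Y b f}"
  show "{e \<in> out_edges Y b. out_part_label f e = i} \<noteq> {}"
  proof (cases "i = 1")
    case True then show ?thesis using fe sf unfolding out_part_label_def out_edges_def by auto
  next
    case False
    then have "i = 2" "\<not> out_edges Y b \<subseteq> {f}" using i unfolding out_part_count_def by (auto split: if_splits)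
    then show ?thesis unfolding out_part_label_def by auto
  qed
qed

lemma move_O_ok_split_off_edge: "move_O_ok Y b (out_part_count Y b f) (out_part_label f)"
proof -
  have "{i \<in> {1..out_part_count Y b f}. infinite {e \<in> out_edges Y b. out_part_label f e = i}} \<subseteq> {2}"
  proof
    fix i assume i: "i \<in> {i \<in> {1..out_part_count Y b f}. infinite {e \<in> out_edges Y b. out_part_label f e = i}}"
    moreover have "finite {e \<in> out_edges Y b. out_part_label f e = 1}"
      by (rule finite_subset[of _ "{f}"]) (auto simp: out_part_label_def)
    ultimately have "i \<noteq> 1" by auto
    then show "i \<in> {2}" using i unfolding out_part_count_def by (auto split: if_splits)
  qed
  then have "card {i \<in> {1..out_part_count Y b f}. infinite {e \<in> out_edges Y b. out_part_label f e = i}}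
      \<le> card {2 :: nat}"
    by (intro card_mono) auto
  moreover have "f \<in> out_edges Y b" using fe sf unfolding out_edges_def by simp
  ultimately show ?thesis
    using is_partition_split_off_edge bv unfolding move_O_ok_def is_sink_def by auto
qed

lemma out_edges_split_off_edge: "out_edges (split_off_edge Y b f) (b, 1) = {(f, 0)}"
proof -
  have "x \<in> out_edges (split_off_edge Y b f) (b, 1) \<longleftrightarrow> x = (f, 0)" for x
    using fe sf rf unfolding out_edges_def split_off_edge_def
    by (cases x) (auto simp: move_O_simps out_part_label_def split: if_splits)
  then show ?thesis by auto
qed

lemma out_part_count_loop: "a = b \<Longrightarrow> out_part_count Y b f = 2"
  using edge_a_b rf unfolding out_part_count_def out_edges_def by auto

lemma copy_of_in_verts: "copy_of a b \<in> verts (split_off_edge Y b f)"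
  using av out_part_count_loop unfolding split_off_edge_def copy_of_def by (auto simp: move_O_simps)

lemma in_part_count_pos: "1 \<le> in_part_count Y a b f"
  unfolding in_part_count_def by simp

lemma is_partition_split_off_source:
  "is_partition (in_edges (split_off_edge Y b f) (b, 1)) (in_part_count Y a b f) (in_part_label Y a b f)"
  unfolding is_partition_def
proof (intro conjI ballI)
  show "1 \<le> in_part_count Y a b f" by (rule in_part_count_pos)
  fix e assume "e \<in> in_edges (split_off_edge Y b f) (b, 1)"
  then show "in_part_label Y a b f e \<in> {1..in_part_count Y a b f}"
    unfolding in_part_label_def in_part_count_def by auto
next
  fix i assume i: "i \<in> {1..in_part_count Y a b f}"
  show "{e \<in> in_edges (split_off_edge Y b f) (b, 1). in_part_label Y a b f e = i} \<noteq> {}"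
  proof (cases "i = 1")
    case True
    obtain p where p: "p \<in> edges Y" "src Y p = a" "rng Y p = b" using edge_a_b by blast
    then have "p \<noteq> f" using rf by auto
    then have "(p, 1) \<in> in_edges (split_off_edge Y b f) (b, 1)"
      "src (split_off_edge Y b f) (p, 1) = copy_of a b"
      using p unfolding in_edges_def split_off_edge_def copy_of_def out_part_count_def
      by (auto simp: move_O_simps out_part_label_def)
    then show ?thesis using True unfolding in_part_label_def by auto
  next
    case False
    then have "i = 2" "in_part_count Y a b f = 2" using i unfolding in_part_count_def by (auto split: if_splits)
    then show ?thesis unfolding in_part_label_def in_part_count_def by (auto split: if_splits)
  qed
qed

lemma move_I_ok_split_off_source:
  "move_I_ok (split_off_edge Y b f) (b, 1) (in_part_count Y a b f) (in_part_label Y a b f)"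
proof -
  have "(b, 1) \<in> verts (split_off_edge Y b f)"
    using bv unfolding split_off_edge_def out_part_count_def by (auto simp: move_O_simps)
  moreover have "in_edges (split_off_edge Y b f) (b, 1) \<noteq> {}"
    using is_partition_split_off_source unfolding is_partition_def by fastforce
  ultimately show ?thesis using is_partition_split_off_source out_edges_split_off_edge
    unfolding move_I_ok_def is_source_def is_regular_def by simp
qed

lemma out_edges_split_off_source: "out_edges (split_off_source Y a b f) ((b, 1), 1) = {((f, 0), 1)}"
proof -
  have "e \<in> edges (split_off_edge Y b f) \<and> src (split_off_edge Y b f) e = (b, 1) \<longleftrightarrow> e = (f, 0)" for e
    using out_edges_split_off_edge unfolding out_edges_def by blast
  then have "x \<in> out_edges (split_off_source Y a b f) ((b, 1), 1) \<longleftrightarrow> x = ((f, 0), 1)" for x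
    unfolding out_edges_def split_off_source_def using in_part_count_pos by (cases x) (auto simp: move_I_simps)
  then show ?thesis by auto
qed

lemma src_in_edges_split_off_source:
  assumes "x \<in> in_edges (split_off_source Y a b f) ((b, 1), 1)"
  shows "src (split_off_source Y a b f) x = (copy_of a b, 0)"
proof -
  obtain e j where x: "x = (e, j)" by (cases x)
  then have "in_part_label Y a b f e = 1"
    using assms unfolding in_edges_def split_off_source_def by (auto simp: move_I_simps split: if_splits)
  then have "src (split_off_edge Y b f) e = copy_of a b" unfolding in_part_label_def by (auto split: if_splits)
  then show ?thesis unfolding x split_off_source_def using copy_of_ne[of a b] by (auto simp: move_I_simps)
qed

lemma move_R_ok_reroute: "move_R_ok (split_off_source Y a b f) ((b, 1), 1) ((f, 0), 1) (copy_of a b, 0)"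
proof -
  have "rng (split_off_edge Y b f) (f, 0) = (rng Y f, 0)"
    unfolding split_off_edge_def move_O_simps using rf by simp
  then have "rng (split_off_source Y a b f) ((f, 0), 1) \<noteq> ((b, 1), 1)"
    unfolding split_off_source_def move_I_simps using rf by simp
  moreover have "((b, 1), 1) \<in> verts (split_off_source Y a b f)"
    "(copy_of a b, 0) \<in> verts (split_off_source Y a b f)"
    unfolding split_off_source_def move_I_simps
    using in_part_count_pos copy_of_in_verts copy_of_ne[of a b] by auto
  ultimately show ?thesis
    using out_edges_split_off_source src_in_edges_split_off_source
    unfolding move_R_ok_def is_regular_def by auto
qed

lemma wf_graph_split_off_edge: "wf_graph (split_off_edge Y b f)"
  unfolding split_off_edge_def by (rule wf_graph_move_O[OF wf is_partition_split_off_edge])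

lemma wf_graph_split_off_source: "wf_graph (split_off_source Y a b f)"
  unfolding split_off_source_def
  by (rule wf_graph_move_I[OF wf_graph_split_off_edge is_partition_split_off_source])

lemma move_equiv_in_reroute:
  assumes "infinite (UNIV :: 't set)" "|edges Y| \<le>o |UNIV :: 't set|"
  shows "move_equiv_in TYPE('t) Y (reroute Y a b f)"
proof -
  have fin1: "finite (verts (split_off_edge Y b f))" and fin2: "finite (verts (split_off_source Y a b f))"
    unfolding split_off_source_def split_off_edge_def
    by (simp_all add: finite_verts_move_O finite_verts_move_I fin)
  have card1: "|edges (split_off_edge Y b f)| \<le>o |UNIV :: 't set|"
    unfolding split_off_edge_def using card_edges_move_O[OF assms] .
  then have card2: "|edges (split_off_source Y a b f)| \<le>o |UNIV :: 't set|"
    unfolding split_off_source_def by (rule card_edges_move_I[OF assms(1)])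
  have step1: "move_equiv_in TYPE('t) Y (split_off_edge Y b f)"
    unfolding split_off_edge_def
    by (rule move_equiv_in_move_O[OF assms(1) wf fin assms(2) move_O_ok_split_off_edge])
  have step2: "move_equiv_in TYPE('t) (split_off_edge Y b f) (split_off_source Y a b f)"
    unfolding split_off_source_def
    by (rule move_equiv_in_move_I[OF assms(1) wf_graph_split_off_edge fin1 card1 move_I_ok_split_off_source])
  have step3: "move_equiv_in TYPE('t) (split_off_source Y a b f) (reroute Y a b f)"
    unfolding reroute_def
    by (rule move_equiv_in_move_R[OF assms(1) wf_graph_split_off_source fin2 card2 move_R_ok_reroute])
  have "(f, 0) \<in> edges (split_off_edge Y b f)" "((f, 0), 1) \<in> edges (split_off_source Y a b f)"
    using out_edges_split_off_edge out_edges_split_off_source unfolding out_edges_def by auto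
  then show ?thesis using move_equiv_in_trans[OF move_equiv_in_trans[OF step1 step2] step3] by blast
qed

end

lemma sum_prod_prod_cases:
  obtains e i j where "x = Inl ((Inl e, i), j)" | e i j where "x = Inr ((Inl e, i), j)"
    | m i j where "x = Inl ((Inr m, i), j)" | m i j where "x = Inr ((Inr m, i), j)"
  by (metis sumE surj_pair)

text \<open>Rerouting X with and without countably many new edges from a to c; the new edges are not
  affected by the moves, so the two results differ exactly by these edges.\<close>
locale reroute_new_edges =
  fixes X :: "('v, 'e) graph" and a b :: 'v and f :: 'e
  assumes wf: "wf_graph X" and fin: "finite (verts X)"
    and fe: "f \<in> edges X" and sf: "src X f = b" and rf: "rng X f \<noteq> b"
    and inf: "infinite (parallel_edges X a b)"
begin

definition c :: 'v where "c = rng X f"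

lemma edge_a_b: "\<exists>p\<in>edges X. src X p = a \<and> rng X p = b"
  using inf not_finite_existsD unfolding parallel_edges_def by fastforce

lemma av: "a \<in> verts X" and cv: "c \<in> verts X"
  using wf edge_a_b fe unfolding wf_graph_def c_def by auto

lemma cb: "c \<noteq> b" using rf c_def by simp

abbreviation with_new_edges :: "nat set \<Rightarrow> ('v, 'e + nat) graph" where
  "with_new_edges S \<equiv> add_edges X a c S"

abbreviation rerouted where
  "rerouted S \<equiv> reroute (with_new_edges S) a b (Inl f)"

lemma reroute_setting_X: "reroute_setting X a b f"
  using wf fin fe sf rf edge_a_b by unfold_locales

lemma reroute_setting_with_new_edges: "reroute_setting (with_new_edges S) a b (Inl f)"
proof -
  obtain p where "p \<in> edges X" "src X p = a" "rng X p = b" using edge_a_b by blast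
  then have "\<exists>p\<in>edges (with_new_edges S). src (with_new_edges S) p = a \<and> rng (with_new_edges S) p = b"
    by (intro bexI[of _ "Inl p"]) auto
  then show ?thesis using wf_graph_add_edges[OF wf av cv] fin fe sf rf by unfold_locales auto
qed

lemma out_part_count_with_new_edges: "out_part_count (with_new_edges S) b (Inl f) = out_part_count X b f"
proof (cases "a = b")
  case True
  then show ?thesis
    using reroute_setting.out_part_count_loop[OF reroute_setting_with_new_edges]
      reroute_setting.out_part_count_loop[OF reroute_setting_X] by simp
next
  case False
  then have "out_edges (with_new_edges S) b = Inl ` out_edges X b"
    unfolding out_edges_def add_edges_def by auto
  then show ?thesis unfolding out_part_count_def by auto
qed

lemma in_part_count_with_new_edges: "in_part_count (with_new_edges S) a b (Inl f) = in_part_count X a b f"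
proof -
  let ?Z = "split_off_edge (with_new_edges S) b (Inl f)" and ?Y = "split_off_edge X b f"
  have "(\<exists>e\<in>in_edges ?Z (b, 1). src ?Z e \<noteq> copy_of a b) \<longleftrightarrow> (\<exists>e\<in>in_edges ?Y (b, 1). src ?Y e \<noteq> copy_of a b)"
  proof
    assume "\<exists>e\<in>in_edges ?Z (b, 1). src ?Z e \<noteq> copy_of a b"
    then obtain d i where d: "(d, i) \<in> in_edges ?Z (b, 1)" "src ?Z (d, i) \<noteq> copy_of a b" by auto
    show "\<exists>e\<in>in_edges ?Y (b, 1). src ?Y e \<noteq> copy_of a b"
    proof (cases d)
      case (Inl e)
      then show ?thesis using d unfolding in_edges_def split_off_edge_def out_part_count_with_new_edges
        by (intro bexI[of _ "(e, i)"]) (auto simp: move_O_simps out_part_label_def)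
    next
      case (Inr m)
      then show ?thesis using d cb unfolding in_edges_def split_off_edge_def by (auto simp: move_O_simps)
    qed
  next
    assume "\<exists>e\<in>in_edges ?Y (b, 1). src ?Y e \<noteq> copy_of a b"
    then obtain e i where "(e, i) \<in> in_edges ?Y (b, 1)" "src ?Y (e, i) \<noteq> copy_of a b" by auto
    then show "\<exists>e\<in>in_edges ?Z (b, 1). src ?Z e \<noteq> copy_of a b"
      unfolding in_edges_def split_off_edge_def out_part_count_with_new_edges
      by (intro bexI[of _ "(Inl e, i)"]) (auto simp: move_O_simps out_part_label_def)
  qed
  then show ?thesis unfolding in_part_count_def by simp
qed

lemma verts_rerouted: "verts (rerouted S) = verts (rerouted S')"
  unfolding reroute_def split_off_source_def split_off_edge_def in_part_count_with_new_edges
    out_part_count_with_new_edges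
  by (simp add: move_R_def move_I_def move_O_def)

lemma src_rerouted: "src (rerouted S) = src (rerouted S')"
  and rng_rerouted: "rng (rerouted S) = rng (rerouted S')"
  unfolding reroute_def split_off_source_def split_off_edge_def in_part_label_def
  by (simp_all only: src_rng_move_eqs src_rng_add_edges_eqs)

definition new_edge :: "nat \<Rightarrow> (('e + nat) \<times> nat) \<times> nat + (('e + nat) \<times> nat) \<times> nat" where
  "new_edge m = Inl ((Inr m, 0), 0)"

lemma old_edge_rerouted_iff:
  "Inl ((Inl e, i), j) \<in> edges (rerouted S) \<longleftrightarrow> Inl ((Inl e, i), j) \<in> edges (rerouted S')"
  "Inr ((Inl e, i), j) \<in> edges (rerouted S) \<longleftrightarrow> Inr ((Inl e, i), j) \<in> edges (rerouted S')"
  unfolding reroute_def split_off_source_def split_off_edge_def in_part_label_def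
    in_part_count_with_new_edges out_part_count_with_new_edges
  by (simp_all add: move_R_simps move_I_simps move_O_simps out_part_label_def)

lemma new_edge_rerouted_iff:
  "Inl ((Inr m, i), j) \<in> edges (rerouted S) \<longleftrightarrow> m \<in> S \<and> i = 0 \<and> j = 0"
  "Inr ((Inr m, i), j) \<notin> edges (rerouted S)"
proof -
  have "src (split_off_edge (with_new_edges S) b (Inl f)) (Inr m, 0) = copy_of a b"
    unfolding split_off_edge_def copy_of_def by (auto simp: move_O_simps out_part_label_def)
  then show "Inl ((Inr m, i), j) \<in> edges (rerouted S) \<longleftrightarrow> m \<in> S \<and> i = 0 \<and> j = 0"
    unfolding reroute_def split_off_source_def using copy_of_ne[of a b] cb
    by (auto simp: move_R_simps move_I_simps split_off_edge_def move_O_simps)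
  show "Inr ((Inr m, i), j) \<notin> edges (rerouted S)"
    unfolding reroute_def split_off_source_def split_off_edge_def using cb
    by (auto simp: move_R_simps move_I_simps move_O_simps split: if_splits)
qed

lemma edges_rerouted: "edges (rerouted UNIV) = edges (rerouted {}) \<union> range new_edge"
proof (intro equalityI subsetI)
  fix x assume x: "x \<in> edges (rerouted UNIV)"
  show "x \<in> edges (rerouted {}) \<union> range new_edge"
  proof (cases x rule: sum_prod_prod_cases)
    case (1 e i j) then show ?thesis using x old_edge_rerouted_iff(1)[of e i j UNIV "{}"] by simp
  next
    case (2 e i j) then show ?thesis using x old_edge_rerouted_iff(2)[of e i j UNIV "{}"] by simp
  next
    case (3 m i j) then show ?thesis using x new_edge_rerouted_iff(1) unfolding new_edge_def by auto
  next
    case (4 m i j) then show ?thesis using x new_edge_rerouted_iff(2) by simp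
  qed
next
  fix x assume x: "x \<in> edges (rerouted {}) \<union> range new_edge"
  show "x \<in> edges (rerouted UNIV)"
  proof (cases x rule: sum_prod_prod_cases)
    case (1 e i j) then show ?thesis
      using x old_edge_rerouted_iff(1)[of e i j "{}" UNIV] new_edge_rerouted_iff(1) unfolding new_edge_def by auto
  next
    case (2 e i j) then show ?thesis using x old_edge_rerouted_iff(2)[of e i j "{}" UNIV] unfolding new_edge_def by auto
  next
    case (3 m i j) then show ?thesis using x new_edge_rerouted_iff(1) unfolding new_edge_def by auto
  next
    case (4 m i j) then show ?thesis using x new_edge_rerouted_iff(2) unfolding new_edge_def by auto
  qed
qed

lemma src_new_edge: "src (rerouted S) (new_edge m) = (copy_of a b, 0)"
  and rng_new_edge: "rng (rerouted S) (new_edge m) = ((c, 0), 0)"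
proof -
  have "src (split_off_edge (with_new_edges S) b (Inl f)) (Inr m, 0) = copy_of a b"
    unfolding split_off_edge_def copy_of_def by (auto simp: move_O_simps out_part_label_def)
  then show "src (rerouted S) (new_edge m) = (copy_of a b, 0)"
    unfolding reroute_def split_off_source_def new_edge_def using copy_of_ne[of a b]
    by (simp add: move_R_simps move_I_simps)
  show "rng (rerouted S) (new_edge m) = ((c, 0), 0)"
    unfolding reroute_def split_off_source_def new_edge_def split_off_edge_def using cb
    by (simp add: move_R_simps move_I_simps move_O_simps c_def)
qed

text \<open>Each edge p from a to b is turned into the edge [p f] from a to c.\<close>
lemma infinite_parallel_edges_rerouted: "infinite (parallel_edges (rerouted {}) (copy_of a b, 0) ((c, 0), 0))"
proof -
  let ?Y1 = "split_off_edge (with_new_edges {}) b (Inl f)"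
    and ?Y2 = "split_off_source (with_new_edges {}) a b (Inl f)"
  have "Inr ((Inl p, 1), 0) \<in> parallel_edges (rerouted {}) (copy_of a b, 0) ((c, 0), 0)"
    if p: "p \<in> parallel_edges X a b" for p
  proof -
    have "p \<in> edges X" "src X p = a" "rng X p = b" "p \<noteq> f" using p rf unfolding parallel_edges_def by auto
    then have "(Inl p, 1) \<in> edges ?Y1" "rng ?Y1 (Inl p, 1) = (b, 1)" "src ?Y1 (Inl p, 1) = copy_of a b"
      unfolding split_off_edge_def copy_of_def out_part_count_def
      by (auto simp: move_O_simps out_part_label_def)
    then have "((Inl p, 1), 0) \<in> edges ?Y2" "rng ?Y2 ((Inl p, 1), 0) = ((b, 1), 1)"
      unfolding split_off_source_def using copy_of_ne[of a b] by (auto simp: move_I_simps in_part_label_def)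
    moreover have "rng ?Y2 ((Inl f, 0), 1) = ((c, 0), 0)"
      unfolding split_off_source_def split_off_edge_def using cb fe by (simp add: move_I_simps move_O_simps c_def)
    ultimately show ?thesis unfolding reroute_def parallel_edges_def by (simp add: move_R_simps)
  qed
  then have "(\<lambda>p. Inr ((Inl p, 1), 0)) ` parallel_edges X a b \<subseteq> parallel_edges (rerouted {}) (copy_of a b, 0) ((c, 0), 0)"
    by blast
  moreover have "inj_on (\<lambda>p. Inr ((Inl p, 1), 0) :: (('e + nat) \<times> nat) \<times> nat + (('e + nat) \<times> nat) \<times> nat)
      (parallel_edges X a b)"
    by (auto simp: inj_on_def)
  ultimately show ?thesis using inj_on_finite inf by blast
qed

lemma graph_iso_rerouted: "graph_iso (rerouted UNIV) (rerouted {})"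
  by (rule graph_iso_absorb_parallel_edges[where h=new_edge and x="(copy_of a b, 0)" and y="((c, 0), 0)"])
    (use verts_rerouted src_rerouted rng_rerouted edges_rerouted src_new_edge rng_new_edge
      infinite_parallel_edges_rerouted in auto)

lemma wf_graph_rerouted: "wf_graph (rerouted S)"
  unfolding reroute_def
  using wf_graph_move_R[OF reroute_setting.wf_graph_split_off_source reroute_setting.move_R_ok_reroute,
    OF reroute_setting_with_new_edges reroute_setting_with_new_edges] .

end

subsection \<open>Adding edges parallel to a path\<close>

lemma move_equiv_in_add_edges_along_edge:
  fixes X :: "('v, 'e) graph"
  assumes "infinite (UNIV :: 't set)" "wf_graph X" "finite (verts X)" "|edges X| \<le>o |UNIV :: 't set|"
    and "f \<in> edges X" "src X f = b" "infinite (parallel_edges X a b)"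
  shows "move_equiv_in TYPE('t) X (add_edges X a (rng X f) UNIV)"
proof -
  obtain p where "p \<in> edges X" "src X p = a" "rng X p = b"
    using assms(7) not_finite_existsD unfolding parallel_edges_def by blast
  then have ab: "a \<in> verts X" "b \<in> verts X" and c: "rng X f \<in> verts X"
    using assms(2,5) unfolding wf_graph_def by auto
  have wf_new: "wf_graph (add_edges X a (rng X f) S)" for S by (rule wf_graph_add_edges[OF assms(2) ab(1) c])
  show ?thesis
  proof (cases "rng X f = b")
    case True
    then show ?thesis using move_equiv_in_add_edges_absorb[OF assms(2-4) ab(1) c] assms(7) by simp
  next
    case False
    interpret reroute_new_edges X a b f
      using assms(2,3,5-7) False by unfold_locales
    have card: "|edges (with_new_edges S)| \<le>o |UNIV :: 't set|" for S
      by (rule card_edges_add_edges[OF assms(1,4)])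
    have reroute: "move_equiv_in TYPE('t) (with_new_edges S) (rerouted S)" for S
      by (rule reroute_setting.move_equiv_in_reroute[OF reroute_setting_with_new_edges assms(1) card])
    have "move_equiv_in TYPE('t) X (with_new_edges {})"
      by (rule move_equiv_in_if_graph_iso[OF assms(2-4) iso_via_imp_graph_iso[OF iso_via_add_no_edges]])
        (use wf_new c_def in simp)
    moreover have "move_equiv_in TYPE('t) (rerouted {}) (with_new_edges UNIV)"
      using move_equiv_in_sym[OF move_equiv_in_graph_iso_trans[OF reroute graph_iso_rerouted wf_graph_rerouted]] .
    moreover have "edges (with_new_edges {}) \<noteq> {}" "edges (rerouted {}) \<noteq> {}"
      using assms(5) infinite_parallel_edges_rerouted by (auto simp: add_edges_def parallel_edges_def)
    ultimately show ?thesis using reroute move_equiv_in_trans c_def by metis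
  qed
qed


lemma is_path_snoc:
  assumes "is_path X (\<beta> @ [g])" "\<beta> \<noteq> []"
  shows "is_path X \<beta>" "g \<in> edges X" "rng X (last \<beta>) = src X g"
proof -
  show "is_path X \<beta>" using assms unfolding is_path_def by (auto simp: nth_append)
  show "g \<in> edges X" using assms unfolding is_path_def by auto
  have "Suc (length \<beta> - 1) < length (\<beta> @ [g])" using assms(2) by simp
  then have "rng X ((\<beta> @ [g]) ! (length \<beta> - 1)) = src X ((\<beta> @ [g]) ! Suc (length \<beta> - 1))"
    using assms(1) unfolding is_path_def by blast
  then show "rng X (last \<beta>) = src X g" using assms(2) by (simp add: nth_append last_conv_nth)
qed

lemma is_path_add_edges: "is_path X \<beta> \<Longrightarrow> is_path (add_edges X a c S) (map Inl \<beta>)"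
  unfolding is_path_def by auto

lemma is_path_iso_via:
  assumes "iso_via X Z \<phi> \<psi>" "is_path X \<beta>"
  shows "is_path Z (map \<psi> \<beta>)"
    and "src Z (hd (map \<psi> \<beta>)) = \<phi> (src X (hd \<beta>))" "rng Z (hd (map \<psi> \<beta>)) = \<phi> (rng X (hd \<beta>))"
    and "rng Z (last (map \<psi> \<beta>)) = \<phi> (rng X (last \<beta>))"
proof -
  have \<psi>: "\<forall>e\<in>edges X. \<psi> e \<in> edges Z" and hom: "\<forall>e\<in>edges X. src Z (\<psi> e) = \<phi> (src X e) \<and> rng Z (\<psi> e) = \<phi> (rng X e)"
    using assms(1) unfolding iso_via_def bij_betw_def by auto
  have \<beta>: "\<beta> \<noteq> []" "set \<beta> \<subseteq> edges X" using assms(2) unfolding is_path_def by auto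
  then show "src Z (hd (map \<psi> \<beta>)) = \<phi> (src X (hd \<beta>))" "rng Z (hd (map \<psi> \<beta>)) = \<phi> (rng X (hd \<beta>))"
    "rng Z (last (map \<psi> \<beta>)) = \<phi> (rng X (last \<beta>))"
    using hom by (simp_all add: hd_map last_map subset_iff)
  have "rng Z (\<psi> (\<beta> ! i)) = src Z (\<psi> (\<beta> ! Suc i))" if "Suc i < length \<beta>" for i
    using that hom \<beta>(2) assms(2) unfolding is_path_def by (simp add: subset_iff)
  then show "is_path Z (map \<psi> \<beta>)" using \<beta> \<psi> unfolding is_path_def by auto
qed

lemma move_equiv_in_add_edges_along_path_iso_via:
  assumes "iso_via Y X \<phi> \<psi>" "wf_graph Y" "is_path Y \<beta>"
    and "move_equiv_in TYPE('t) X (add_edges X (src X (hd (map \<psi> \<beta>))) (rng X (last (map \<psi> \<beta>))) UNIV)"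
  shows "move_equiv_in TYPE('t) Y (add_edges Y (src Y (hd \<beta>)) (rng Y (last \<beta>)) UNIV)"
proof -
  have "hd \<beta> \<in> edges Y" "last \<beta> \<in> edges Y" using assms(3) unfolding is_path_def by auto
  then have wf: "wf_graph (add_edges Y (src Y (hd \<beta>)) (rng Y (last \<beta>)) UNIV)"
    using assms(2) by (intro wf_graph_add_edges) (auto simp: wf_graph_def)
  have "move_equiv_in TYPE('t) X (add_edges X (\<phi> (src Y (hd \<beta>))) (\<phi> (rng Y (last \<beta>))) UNIV)"
    using assms(4) is_path_iso_via[OF assms(1,3)] by simp
  then show ?thesis
    by (rule move_equiv_in_graph_iso_cong[OF _ iso_via_imp_graph_iso[OF assms(1)]
          iso_via_imp_graph_iso[OF iso_via_add_edges[OF assms(1)]] assms(2) wf])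
qed

lemma move_equiv_in_add_edges_along_path_via_copy:
  fixes Y :: "('v, 'e) graph"
  assumes "wf_graph Y" "finite (verts Y)" "|edges Y| \<le>o |UNIV :: 't set|" "is_path Y \<beta>"
    and "infinite (parallel_edges Y (src Y (hd \<beta>)) (rng Y (hd \<beta>)))"
    and copy: "\<And>(X :: (nat, 't) graph) \<beta>'. length \<beta>' = length \<beta> \<Longrightarrow> wf_graph X \<Longrightarrow> finite (verts X) \<Longrightarrow>
      is_path X \<beta>' \<Longrightarrow> infinite (parallel_edges X (src X (hd \<beta>')) (rng X (hd \<beta>'))) \<Longrightarrow>
      move_equiv_in TYPE('t) X (add_edges X (src X (hd \<beta>')) (rng X (last \<beta>')) UNIV)"
  shows "move_equiv_in TYPE('t) Y (add_edges Y (src Y (hd \<beta>)) (rng Y (last \<beta>)) UNIV)"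
proof -
  obtain X :: "(nat, 't) graph" and \<phi> \<psi> where iso: "iso_via Y X \<phi> \<psi>"
    using obtain_iso_via_nat_verts assms(2,3) by blast
  note path = is_path_iso_via[OF iso assms(4)]
  have "infinite (parallel_edges X (src X (hd (map \<psi> \<beta>))) (rng X (hd (map \<psi> \<beta>))))"
    using infinite_parallel_edges_iso_via[OF iso assms(5)] path(2,3) by simp
  then have "move_equiv_in TYPE('t) X (add_edges X (src X (hd (map \<psi> \<beta>))) (rng X (last (map \<psi> \<beta>))) UNIV)"
    by (rule copy[OF length_map iso_via_wf_graph[OF iso assms(1)] iso_via_finite_verts[OF iso assms(2)] path(1)])
  then show ?thesis by (rule move_equiv_in_add_edges_along_path_iso_via[OF iso assms(1,4)])
qed

text \<open>The induction runs over graphs with vertices in nat and edges in the universe 't, so that the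
  induction hypothesis can be applied to a copy of the enlarged graph X + (a \<rightarrow> y).\<close>
lemma move_equiv_in_add_edges_along_path:
  fixes X :: "(nat, 't) graph"
  assumes "infinite (UNIV :: 't set)" "wf_graph X" "finite (verts X)" "is_path X \<beta>"
    and "infinite (parallel_edges X (src X (hd \<beta>)) (rng X (hd \<beta>)))"
  shows "move_equiv_in TYPE('t) X (add_edges X (src X (hd \<beta>)) (rng X (last \<beta>)) UNIV)"
  using assms(2-5)
proof (induction "length \<beta>" arbitrary: \<beta> X)
  case 0
  then show ?case unfolding is_path_def by simp
next
  case (Suc n)
  then obtain \<gamma> g where \<beta>: "\<beta> = \<gamma> @ [g]" by (metis length_Suc_conv_rev)
  have len: "n = length \<gamma>" using Suc.hyps(2) \<beta> by simp
  note prems = Suc.prems[unfolded \<beta>]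
  have card: "|edges X| \<le>o |UNIV :: 't set|" by (rule card_of_mono1) simp
  show ?case
  proof (cases "\<gamma> = []")
    case True
    then have "g \<in> edges X" using prems(3) unfolding is_path_def by simp
    then have "src X g \<in> verts X" "rng X g \<in> verts X" using prems(1) unfolding wf_graph_def by auto
    then show ?thesis using move_equiv_in_add_edges_absorb[OF prems(1,2) card] prems(4) \<beta> True by simp
  next
    case False
    note path = is_path_snoc[OF prems(3) False]
    define a x y where "a = src X (hd \<gamma>)" and "x = rng X (last \<gamma>)" and "y = rng X g"
    have inf: "infinite (parallel_edges X a (rng X (hd \<gamma>)))" using prems(4) False a_def by simp
    have "hd \<gamma> \<in> edges X" "last \<gamma> \<in> edges X" using path(1) False unfolding is_path_def by auto
    then have verts: "a \<in> verts X" "x \<in> verts X" "y \<in> verts X"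
      using prems(1) path(2) unfolding a_def x_def y_def wf_graph_def by auto
    have wf_new: "wf_graph (add_edges X a u UNIV)" if "u \<in> verts X" for u
      using wf_graph_add_edges[OF prems(1) verts(1) that] .
    let ?Xx = "add_edges X a x UNIV" and ?Xy = "add_edges X a y UNIV"
    have wf_yx: "wf_graph (add_edges ?Xy a x UNIV)"
      using wf_graph_add_edges[OF wf_new[OF verts(3)]] verts by simp
    have "move_equiv_in TYPE('t) X ?Xx"
      using Suc.hyps(1)[OF len prems(1,2) path(1) inf[unfolded a_def]] unfolding a_def x_def .
    moreover have "move_equiv_in TYPE('t) ?Xx (add_edges ?Xx a y UNIV)"
      using move_equiv_in_add_edges_along_edge[OF assms(1) wf_new[OF verts(2)] _ card_edges_add_edges[OF assms(1) card]
          _ _ infinite_parallel_new_edges, of "Inl g"] prems(2) path(2,3) unfolding x_def y_def by simp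
    ultimately have "move_equiv_in TYPE('t) X (add_edges ?Xx a y UNIV)"
      by (rule move_equiv_in_trans) (simp add: add_edges_def)
    then have "move_equiv_in TYPE('t) X (add_edges ?Xy a x UNIV)"
      by (rule move_equiv_in_graph_iso_trans[OF _ iso_via_imp_graph_iso[OF iso_via_add_edges_swap] wf_yx])
    moreover have "move_equiv_in TYPE('t) ?Xy (add_edges ?Xy a x UNIV)"
    proof -
      have "move_equiv_in TYPE('t) ?Xy
          (add_edges ?Xy (src ?Xy (hd (map Inl \<gamma>))) (rng ?Xy (last (map Inl \<gamma>))) UNIV)"
        using move_equiv_in_add_edges_along_path_via_copy[OF wf_new[OF verts(3)] _
            card_edges_add_edges[OF assms(1) card] is_path_add_edges[OF path(1)] _ Suc.hyps(1)]
          infinite_parallel_edges_add_edges[OF inf] len prems(2) False unfolding a_def by (simp add: hd_map)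
      then show ?thesis using False unfolding a_def x_def by (simp add: hd_map last_map)
    qed
    ultimately have "move_equiv_in TYPE('t) X ?Xy"
      by (rule move_equiv_in_trans[OF _ move_equiv_in_sym]) (simp add: add_edges_def)
    then show ?thesis using \<beta> False unfolding a_def y_def by simp
  qed
qed

theorem theorem5p4:
  fixes G :: "('v, 'e) graph" and \<alpha> :: "'e list"
  assumes "wf_graph G"
    and "finite (verts G)"
    and "is_path G \<alpha>"
    and "infinite {e \<in> edges G. src G e = src G (hd \<alpha>) \<and> rng G e = rng G (hd \<alpha>)}"
  shows "move_equiv G (add_path_edges G \<alpha>)"
proof -
  have "|edges G| \<le>o |UNIV :: ('e + ('e + nat) + nat) set|"
    by (rule card_of_ordLeq[THEN iffD1, OF exI[of _ Inl]]) simp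
  moreover have "infinite (UNIV :: ('e + ('e + nat) + nat) set)" by simp
  ultimately have "move_equiv_in TYPE('e + ('e + nat) + nat) G
      (add_edges G (src G (hd \<alpha>)) (rng G (last \<alpha>)) UNIV)"
    using move_equiv_in_add_edges_along_path_via_copy[OF assms(1,2) _ assms(3)]
      move_equiv_in_add_edges_along_path assms(4) unfolding parallel_edges_def by blast
  then show ?thesis unfolding move_equiv_eq_move_equiv_in add_path_edges_eq_add_edges .
qed

end
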